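(* Let $\Gamma$ be a uniform layered graph with unique minimal vertex, $n\ge2$, and let $L=\{b_1,\dots,b_{|V_n|}\}$ be a basis of $B_n$ such that for every $i$ and every vertex $a\in V_n$ with $a\notin\operatorname{span}\{b_1,\dots,b_{i-1}\}$ we have $\dim\kappa_{b_i}\ge\dim\kappa_a$. Then $L$ is an upper vertex-like basis of $B_n$.
   Context: A layered graph is a finite directed graph $\Gamma=(V,E)$ with $V=\bigsqcup_{i=0}^{N}V_i$ such that every edge from $V_i$ goes to $V_{i-1}$; $|v|=i$ for $v\in V_i$, $V_+=\bigsqcup_{i\ge1}V_i$, $V_{\ge k}=\bigsqcup_{i\ge k}V_i$, $S(v)=\{w:(v,w)\in E\}$, nonempty for $v\in V_+$, $|V_0|=1$. $\Gamma$ is uniform if for every $v\in V_{\ge2}$ the elements of $S(v)$ form a single class under the transitive closure of $w\approx u$ iff $S(w)\cap S(u)\ne\emptyset$. Over a field $\mathbb F$, $B(\Gamma)=T(V_+)/R_B$ with $R_B$ the two-sided ideal generated by $\{vw: v,w\in V_+,(v,w)\notin E\}\cup\{v\sum_{w\in S(v)}w: v\in V_{\ge2}\}$, doubly graded with $v_1\cdots v_m$ in bidegree $(m,\sum|v_i|)$; $B_n=\operatorname{span}V_n$ is the bidegree $(1,n)$ part. For $a\in B_n$, $\kappa_a=\ker(B_{n-1}\to B(\Gamma),b\mapsto ab)$. $B(\Gamma|_n)$ is the subalgebra generated by $\bigcup_{i=1}^nV_i$. A basis $L$ of $B_n$ is upper vertex-like if there is a doubly graded algebra automorphism of $B(\Gamma|_n)$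 fixing every vertex in $\bigcup_{i=1}^{n-1}V_i$ and mapping the set $V_n$ onto $L$. *)

theory Defs
  imports Main "HOL.Vector_Spaces" "HOL-Library.Function_Algebras"
begin

text \<open>A layered graph is given by a finite vertex set V, a level function lev
 (|v| = lev v) and an edge set E.  V_i = {v in V. lev v = i}.\<close>

definition layer :: "'v set \<Rightarrow> ('v \<Rightarrow> nat) \<Rightarrow> nat \<Rightarrow> 'v set" where
  "layer V lev i = {v \<in> V. lev v = i}"

definition succs :: "('v \<times> 'v) set \<Rightarrow> 'v \<Rightarrow> 'v set" where
  "succs E v = {w. (v, w) \<in> E}"

definition layered_graph :: "'v set \<Rightarrow> ('v \<Rightarrow> nat) \<Rightarrow> ('v \<times> 'v) set \<Rightarrow> bool" where
  "layered_graph V lev E \<longleftrightarrow>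
     finite V \<and>
     (\<forall>v w. (v, w) \<in> E \<longrightarrow> v \<in> V \<and> w \<in> V \<and> lev w + 1 = lev v) \<and>
     (\<forall>v \<in> V. 1 \<le> lev v \<longrightarrow> succs E v \<noteq> {}) \<and>
     card (layer V lev 0) = 1"

definition sim_rel :: "('v \<times> 'v) set \<Rightarrow> 'v \<Rightarrow> ('v \<times> 'v) set" where
  "sim_rel E v = {(w, u). w \<in> succs E v \<and> u \<in> succs E v \<and> succs E w \<inter> succs E u \<noteq> {}}"

definition uniform :: "'v set \<Rightarrow> ('v \<Rightarrow> nat) \<Rightarrow> ('v \<times> 'v) set \<Rightarrow> bool" where
  "uniform V lev E \<longleftrightarrow>
     (\<forall>v \<in> V. 2 \<le> lev v \<longrightarrow> (\<forall>w \<in> succs E v. \<forall>u \<in> succs E v. (w, u) \<in> (sim_rel E v)\<^sup>*))"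

text \<open>Elements of the free associative algebra are coefficient functions on words
  (finitely supported, see @tfin below); addition and scaling are pointwise.\<close>

definition mon :: "'v list \<Rightarrow> ('v list \<Rightarrow> 'a::field)" where
  "mon w = (\<lambda>u. if u = w then 1 else 0)"

definition tmult :: "('v list \<Rightarrow> 'a::field) \<Rightarrow> ('v list \<Rightarrow> 'a) \<Rightarrow> ('v list \<Rightarrow> 'a)" where
  "tmult p q = (\<lambda>w. \<Sum>i\<in>{0..length w}. p (take i w) * q (drop i w))"

definition tsupp :: "('v list \<Rightarrow> 'a::field) \<Rightarrow> 'v list set" where
  "tsupp p = {w. p w \<noteq> 0}"

text \<open>T(V_{\<le> n} \<inter> V_+): finitely supported elements whose words use only vertices of
  levels 1..n; with n large this is T(V_+).\<close>
definition TA :: "'v set \<Rightarrow> ('v \<Rightarrow> nat) \<Rightarrow> nat \<Rightarrow> ('v list \<Rightarrow> 'a::field) set" where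
  "TA V lev n = {p. finite (tsupp p) \<and>
      (\<forall>w \<in> tsupp p. \<forall>x \<in> set w. x \<in> V \<and> 1 \<le> lev x \<and> lev x \<le> n)}"

definition RB_gens :: "'v set \<Rightarrow> ('v \<Rightarrow> nat) \<Rightarrow> ('v \<times> 'v) set \<Rightarrow> ('v list \<Rightarrow> 'a::field) set" where
  "RB_gens V lev E =
     {mon [v, w] | v w. v \<in> V \<and> w \<in> V \<and> 1 \<le> lev v \<and> 1 \<le> lev w \<and> (v, w) \<notin> E}
   \<union> {(\<lambda>u. \<Sum>w\<in>succs E v. mon [v, w] u) | v. v \<in> V \<and> 2 \<le> lev v}"

inductive_set RB :: "'v set \<Rightarrow> ('v \<Rightarrow> nat) \<Rightarrow> ('v \<times> 'v) set \<Rightarrow> ('v list \<Rightarrow> 'a::field) set"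
  for V lev E where
  zero: "(\<lambda>_. 0) \<in> RB V lev E"
| gen: "g \<in> RB_gens V lev E \<Longrightarrow> g \<in> RB V lev E"
| add: "x \<in> RB V lev E \<Longrightarrow> y \<in> RB V lev E \<Longrightarrow> (\<lambda>u. x u + y u) \<in> RB V lev E"
| scale: "x \<in> RB V lev E \<Longrightarrow> (\<lambda>u. c * x u) \<in> RB V lev E"
| lmult: "x \<in> RB V lev E \<Longrightarrow> v \<in> V \<Longrightarrow> 1 \<le> lev v \<Longrightarrow> tmult (mon [v]) x \<in> RB V lev E"
| rmult: "x \<in> RB V lev E \<Longrightarrow> v \<in> V \<Longrightarrow> 1 \<le> lev v \<Longrightarrow> tmult x (mon [v]) \<in> RB V lev E"

text \<open>An element of B_n = span V_n is given by a coefficient function c :: 'v => 'a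
  supported on V_n; emb c is the corresponding element of T(V_+).\<close>
definition emb :: "('v \<Rightarrow> 'a::field) \<Rightarrow> ('v list \<Rightarrow> 'a)" where
  "emb c = (\<lambda>u. case u of [v] \<Rightarrow> c v | _ \<Rightarrow> 0)"

definition supported_on :: "('v \<Rightarrow> 'a::field) \<Rightarrow> 'v set \<Rightarrow> bool" where
  "supported_on c S \<longleftrightarrow> (\<forall>v. c v \<noteq> 0 \<longrightarrow> v \<in> S)"

definition delta :: "'v \<Rightarrow> ('v \<Rightarrow> 'a::field)" where
  "delta a = (\<lambda>v. if v = a then 1 else 0)"

text \<open>kappa_a = ker(B_{n-1} -> B(Gamma), b |-> a b), as a subspace of coefficient functions.\<close>
definition kappa :: "'v set \<Rightarrow> ('v \<Rightarrow> nat) \<Rightarrow> ('v \<times> 'v) set \<Rightarrow> nat \<Rightarrow> ('v \<Rightarrow> 'a::field) \<Rightarrow> ('v \<Rightarrow> 'a) set" where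
  "kappa V lev E n a = {c. supported_on c (layer V lev (n - 1)) \<and> tmult (emb a) (emb c) \<in> RB V lev E}"

abbreviation fdim :: "('v \<Rightarrow> 'a::field) set \<Rightarrow> nat" where
  "fdim S \<equiv> vector_space.dim (\<lambda>(c::'a) f x. c * f x) S"

definition in_lin_span :: "('v \<Rightarrow> 'a::field) \<Rightarrow> (nat \<Rightarrow> 'v \<Rightarrow> 'a) \<Rightarrow> nat \<Rightarrow> bool" where
  "in_lin_span c b i \<longleftrightarrow> (\<exists>\<alpha>. \<forall>v. c v = (\<Sum>j<i. \<alpha> j * b j v))"

definition is_basis_Bn :: "'v set \<Rightarrow> ('v \<Rightarrow> nat) \<Rightarrow> nat \<Rightarrow> (nat \<Rightarrow> 'v \<Rightarrow> 'a::field) \<Rightarrow> bool" where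
  "is_basis_Bn V lev n b \<longleftrightarrow>
     (\<forall>i < card (layer V lev n). supported_on (b i) (layer V lev n)) \<and>
     (\<forall>\<alpha>. (\<forall>v. (\<Sum>i<card (layer V lev n). \<alpha> i * b i v) = 0) \<longrightarrow> (\<forall>i < card (layer V lev n). \<alpha> i = 0)) \<and>
     (\<forall>c. supported_on c (layer V lev n) \<longrightarrow> in_lin_span c b (card (layer V lev n)))"

fun wprod :: "('v \<Rightarrow> ('v list \<Rightarrow> 'a::field)) \<Rightarrow> 'v list \<Rightarrow> ('v list \<Rightarrow> 'a)" where
  "wprod f [] = mon []"
| "wprod f (x # xs) = tmult (f x) (wprod f xs)"

text \<open>The unique unital algebra homomorphism of the free algebra sending each letter x to f x.\<close>
definition subst :: "('v \<Rightarrow> ('v list \<Rightarrow> 'a::field)) \<Rightarrow> ('v list \<Rightarrow> 'a) \<Rightarrow> ('v list \<Rightarrow> 'a)" where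
  "subst f p = (\<lambda>u. \<Sum>w\<in>tsupp p. p w * wprod f w u)"

text \<open>L = {b 0, ..., b (k-1)} is upper vertex-like: there is a doubly graded algebra
 automorphism of B(Gamma|_n) (the image of TA V lev n in B(Gamma)) fixing every vertex of
 levels 1..n-1 and mapping V_n onto L.  Any such automorphism lifts to an endomorphism
 subst f of the free algebra on V_1..V_n (free algebra is free); graded means that the
 generator images are homogeneous of the right bidegree; well-definedness, injectivity
 and surjectivity are taken modulo R_B.\<close>
definition upper_vertex_like :: "'v set \<Rightarrow> ('v \<Rightarrow> nat) \<Rightarrow> ('v \<times> 'v) set \<Rightarrow> nat \<Rightarrow> (nat \<Rightarrow> 'v \<Rightarrow> 'a::field) \<Rightarrow> bool" where
  "upper_vertex_like V lev E n b \<longleftrightarrow>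
    (\<exists>f :: 'v \<Rightarrow> ('v list \<Rightarrow> 'a).
       (\<forall>v \<in> V. 1 \<le> lev v \<and> lev v < n \<longrightarrow> f v = mon [v]) \<and>
       (\<forall>v \<in> layer V lev n. \<exists>c. supported_on c (layer V lev n) \<and> f v = emb c) \<and>
       (\<forall>x \<in> TA V lev n. x \<in> RB V lev E \<longrightarrow> subst f x \<in> RB V lev E) \<and>
       (\<forall>x \<in> TA V lev n. subst f x \<in> RB V lev E \<longrightarrow> x \<in> RB V lev E) \<and>
       (\<forall>y \<in> TA V lev n. \<exists>x \<in> TA V lev n. (\<lambda>u. subst f x u - y u) \<in> RB V lev E) \<and>
       f ` layer V lev n = emb ` b ` {..<card (layer V lev n)})"

end

theory Submission
  imports Defs
begin

text \<open>By the degree-two relations, \<open>\<kappa>\<^sub>a\<close> for \<open>a \<in> B\<^sub>n\<close> consists of the \<open>c \<in> B\<^sub>n\<^sub>-\<^sub>1\<close> that are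
  constant on \<open>S(v)\<close> for every vertex \<open>v\<close> in the support of \<open>a\<close>.  Hence \<open>\<kappa>\<^sub>a \<subseteq> \<kappa>\<^sub>v\<close> for
  such \<open>v\<close>, and the greedy hypothesis forces \<open>\<kappa>(b\<^sub>i) = \<kappa>\<^sub>u\<close> for a vertex \<open>u\<close> in the support
  of \<open>b\<^sub>i\<close>.  Counting the \<open>b\<^sub>i\<close> in each class of the preorder \<open>\<kappa>\<^sub>u \<subseteq> \<kappa>\<^sub>w\<close> gives a
  bijection \<open>h : V\<^sub>n \<rightarrow> {0, \<dots>, k - 1}\<close> with \<open>\<kappa>(b\<^sub>h\<^sub>(\<^sub>u\<^sub>)) = \<kappa>\<^sub>u\<close>.  The matrix \<open>\<phi>\<close> of
  the \<open>b\<^sub>h\<^sub>(\<^sub>u\<^sub>)\<close> in the vertex basis is block triangular for this preorder, and so is its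
  inverse \<open>\<gamma>\<close>; both therefore satisfy \<open>\<kappa>\<^sub>v \<subseteq> \<kappa>(\<phi> v)\<close>, which is exactly what makes the
  substitution \<open>v \<mapsto> \<phi> v\<close> of the top layer preserve \<open>R\<^sub>B\<close>.  The substitutions by \<open>\<phi>\<close> and
  \<open>\<gamma>\<close> are already mutually inverse on the free algebra.\<close>

lemma sum_fun_apply: "(\<Sum>i\<in>I. f i) x = (\<Sum>i\<in>I. f i x)"
  by (induction I rule: infinite_finite_induct) auto

subsection \<open>The free algebra\<close>

lemma tmult_mon_mon: "tmult (mon u) (mon w) = (mon (u @ w) :: 'v list \<Rightarrow> 'a::field)"
proof (rule ext)
  fix x :: "'v list"
  have factor: "(mon u (take i x) * mon w (drop i x) :: 'a) =
        (if i = length u then mon (u @ w) x else 0)" if "i \<le> length x" for i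
  proof -
    have "(take i x = u \<and> drop i x = w) \<longleftrightarrow> (i = length u \<and> x = u @ w)"
    proof
      assume "take i x = u \<and> drop i x = w"
      then show "i = length u \<and> x = u @ w"
        using that by (metis append_take_drop_id length_take min.absorb2)
    qed auto
    moreover have "(mon u (take i x) * mon w (drop i x) :: 'a) =
        (if take i x = u \<and> drop i x = w then 1 else 0)"
      by (simp add: mon_def)
    ultimately show ?thesis by (simp add: mon_def)
  qed
  have "tmult (mon u) (mon w) x =
      (\<Sum>i\<in>{0..length x}. if i = length u then mon (u @ w) x else (0 :: 'a))"
    unfolding tmult_def by (rule sum.cong[OF refl], rule factor) simp
  also have "\<dots> = mon (u @ w) x"
    by (auto simp: mon_def)
  finally show "tmult (mon u) (mon w) x = (mon (u @ w) x :: 'a)" .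
qed

lemma tmult_mon_Nil_left: "tmult (mon []) p = p"
proof (rule ext)
  fix x
  have "tmult (mon []) p x = (\<Sum>i\<in>{0..length x}. if i = 0 then p x else 0)"
    unfolding tmult_def by (intro sum.cong) (auto simp: mon_def)
  then show "tmult (mon []) p x = p x" by simp
qed

lemma tmult_mon_Nil_right: "tmult p (mon []) = p"
proof (rule ext)
  fix x
  have "tmult p (mon []) x = (\<Sum>i\<in>{0..length x}. if i = length x then p x else 0)"
    unfolding tmult_def by (intro sum.cong) (auto simp: mon_def)
  then show "tmult p (mon []) x = p x" by simp
qed

lemma tmult_sum_left: "tmult (\<lambda>u. \<Sum>i\<in>I. p i u) q = (\<lambda>u. \<Sum>i\<in>I. tmult (p i) q u)"
  unfolding tmult_def by (rule ext) (simp add: sum_distrib_right sum.swap[of _ I])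

lemma tmult_sum_right: "tmult p (\<lambda>u. \<Sum>i\<in>I. q i u) = (\<lambda>u. \<Sum>i\<in>I. tmult p (q i) u)"
  unfolding tmult_def by (rule ext) (simp add: sum_distrib_left sum.swap[of _ I])

lemma tmult_scale_left: "tmult (\<lambda>u. c * p u) q = (\<lambda>u. c * tmult p q u)"
  unfolding tmult_def by (rule ext) (simp add: sum_distrib_left mult.assoc)

lemma tmult_scale_right: "tmult p (\<lambda>u. c * q u) = (\<lambda>u. c * tmult p q u)"
  unfolding tmult_def by (rule ext) (simp add: sum_distrib_left mult_ac)

lemma tmult_zero_left: "tmult (\<lambda>_. 0) q = (\<lambda>_. 0)"
  unfolding tmult_def by simp

lemma tmult_assoc: "tmult p (tmult q r) = tmult (tmult p q) (r :: 'v list \<Rightarrow> 'a::field)"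
proof (rule ext)
  fix x :: "'v list"
  define n where "n = length x"
  define A where "A i k = p (take i x) * q (drop i (take k x)) * r (drop k x)" for i k
  have "tmult p (tmult q r) x = (\<Sum>i\<in>{0..n}. \<Sum>j\<in>{0..n-i}. A i (j + i))"
    unfolding tmult_def n_def A_def
    by (intro sum.cong refl) (simp add: sum_distrib_left mult.assoc drop_take add.commute)
  also have "\<dots> = (\<Sum>i\<in>{0..n}. \<Sum>k\<in>{i..n}. A i k)"
  proof (rule sum.cong[OF refl])
    fix i assume "i \<in> {0..n}"
    then show "(\<Sum>j\<in>{0..n-i}. A i (j + i)) = (\<Sum>k\<in>{i..n}. A i k)"
      using sum.shift_bounds_cl_nat_ivl[of "A i" 0 i "n - i"] by simp
  qed
  also have "\<dots> = (\<Sum>i\<in>{0..n}. \<Sum>k\<in>{k\<in>{0..n}. i \<le> k}. A i k)"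
    by (intro sum.cong refl) auto
  also have "\<dots> = (\<Sum>k\<in>{0..n}. \<Sum>i\<in>{i\<in>{0..n}. i \<le> k}. A i k)"
    by (rule sum.swap_restrict) auto
  also have "\<dots> = (\<Sum>k\<in>{0..n}. \<Sum>i\<in>{0..k}. A i k)"
    by (intro sum.cong refl) auto
  also have "\<dots> = tmult (tmult p q) r x"
    unfolding tmult_def n_def A_def
    by (intro sum.cong refl) (simp add: sum_distrib_right min_def)
  finally show "tmult p (tmult q r) x = tmult (tmult p q) r x" .
qed

lemma tmult_nonzero_split:
  assumes "tmult p q x \<noteq> 0"
  obtains u w where "x = u @ w" "p u \<noteq> 0" "q w \<noteq> 0"
proof -
  from assms obtain i where "p (take i x) * q (drop i x) \<noteq> 0"
    unfolding tmult_def by (auto elim: sum.not_neutral_contains_not_neutral)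
  then show thesis using that[of "take i x" "drop i x"] by auto
qed

lemma tsupp_tmult: "tsupp (tmult p q) \<subseteq> (\<lambda>(u, w). u @ w) ` (tsupp p \<times> tsupp q)"
  by (auto simp: tsupp_def elim!: tmult_nonzero_split)

lemma finite_tsupp_tmult:
  "finite (tsupp p) \<Longrightarrow> finite (tsupp q) \<Longrightarrow> finite (tsupp (tmult p q))"
  by (rule finite_subset[OF tsupp_tmult]) simp

lemma tsupp_mon: "tsupp (mon w :: 'v list \<Rightarrow> 'a::field) = {w}"
  by (auto simp: tsupp_def mon_def)

lemma tsupp_lincomb: "tsupp (\<lambda>u. \<Sum>i\<in>I. c i * p i u) \<subseteq> (\<Union>i\<in>I. tsupp (p i))"
proof
  fix w assume "w \<in> tsupp (\<lambda>u. \<Sum>i\<in>I. c i * p i u)"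
  then obtain i where "i \<in> I" "c i * p i w \<noteq> 0"
    unfolding tsupp_def by (auto elim: sum.not_neutral_contains_not_neutral)
  then show "w \<in> (\<Union>i\<in>I. tsupp (p i))" unfolding tsupp_def by auto
qed

lemma finite_tsupp_lincomb:
  "finite I \<Longrightarrow> (\<And>i. i \<in> I \<Longrightarrow> finite (tsupp (p i))) \<Longrightarrow>
   finite (tsupp (\<lambda>u. \<Sum>i\<in>I. c i * p i u))"
  by (rule finite_subset[OF tsupp_lincomb]) auto

lemma finite_tsupp_sum:
  "(\<And>i. i \<in> I \<Longrightarrow> finite (tsupp (p i))) \<Longrightarrow> finite (tsupp (\<lambda>u. \<Sum>i\<in>I. p i u))"
  using finite_tsupp_lincomb[of I p "\<lambda>_. 1"] by (cases "finite I") (auto simp: tsupp_def)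

lemma sum_mon_expansion:
  assumes "finite S" "tsupp p \<subseteq> S"
  shows "(\<lambda>u. \<Sum>w\<in>S. p w * mon w u) = p"
proof (rule ext)
  fix u
  have "(\<Sum>w\<in>S. p w * mon w u) = (\<Sum>w\<in>S. if w = u then p u else 0)"
    by (intro sum.cong) (auto simp: mon_def)
  also have "\<dots> = p u" using assms by (auto simp: tsupp_def)
  finally show "(\<Sum>w\<in>S. p w * mon w u) = p u" .
qed

lemma TA_tmult:
  assumes "p \<in> TA V lev n" "q \<in> TA V lev n"
  shows "tmult p q \<in> TA V lev n"
proof -
  have "finite (tsupp (tmult p q))"
    using assms by (intro finite_tsupp_tmult) (auto simp: TA_def)
  moreover have "x \<in> V \<and> 1 \<le> lev x \<and> lev x \<le> n" if "w \<in> tsupp (tmult p q)" "x \<in> set w" for w x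
    using assms tsupp_tmult that unfolding TA_def by fastforce
  ultimately show ?thesis unfolding TA_def by blast
qed

lemma TA_lincomb:
  assumes "finite I" "\<And>i. i \<in> I \<Longrightarrow> p i \<in> TA V lev n"
  shows "(\<lambda>u. \<Sum>i\<in>I. c i * p i u) \<in> TA V lev n"
  using assms finite_tsupp_lincomb[of I p c] tsupp_lincomb[of c p I] unfolding TA_def by blast

lemma TA_mon:
  "(\<And>x. x \<in> set w \<Longrightarrow> x \<in> V \<and> 1 \<le> lev x \<and> lev x \<le> n) \<Longrightarrow>
   (mon w :: 'v list \<Rightarrow> 'a::field) \<in> TA V lev n"
  by (simp add: TA_def tsupp_mon)

lemma TA_wprod: "(\<And>x. x \<in> set w \<Longrightarrow> f x \<in> TA V lev n) \<Longrightarrow> wprod f w \<in> TA V lev n"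
  by (induction w) (auto intro: TA_tmult TA_mon)

lemma finite_tsupp_wprod:
  "(\<And>x. x \<in> set w \<Longrightarrow> finite (tsupp (f x))) \<Longrightarrow> finite (tsupp (wprod f w))"
  by (induction w) (auto intro: finite_tsupp_tmult simp: tsupp_mon)

lemma wprod_append: "wprod f (u @ w) = tmult (wprod f u) (wprod f w)"
  by (induction u) (simp_all add: tmult_mon_Nil_left tmult_assoc)

lemma wprod_eq_mon: "(\<And>x. x \<in> set w \<Longrightarrow> f x = mon [x]) \<Longrightarrow> wprod f w = mon w"
  by (induction w) (simp_all add: tmult_mon_mon)

subsection \<open>Substitution homomorphisms\<close>

lemma subst_eq_sum_superset:
  assumes "finite S" "tsupp p \<subseteq> S"
  shows "subst f p = (\<lambda>u. \<Sum>w\<in>S. p w * wprod f w u)"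
  unfolding subst_def
  by (rule ext, rule sum.mono_neutral_left) (use assms in \<open>auto simp: tsupp_def\<close>)

lemma subst_lincomb:
  assumes I: "finite I" and fin: "\<And>i. i \<in> I \<Longrightarrow> finite (tsupp (p i))"
  shows "subst f (\<lambda>u. \<Sum>i\<in>I. c i * p i u) = (\<lambda>u. \<Sum>i\<in>I. c i * subst f (p i) u)"
proof -
  define S where "S = (\<Union>i\<in>I. tsupp (p i))"
  have S: "finite S" using I fin by (auto simp: S_def)
  have "subst f (\<lambda>u. \<Sum>i\<in>I. c i * p i u) = (\<lambda>u. \<Sum>w\<in>S. (\<Sum>i\<in>I. c i * p i w) * wprod f w u)"
    by (rule subst_eq_sum_superset[OF S]) (use tsupp_lincomb S_def in blast)
  also have "\<dots> = (\<lambda>u. \<Sum>i\<in>I. c i * (\<Sum>w\<in>S. p i w * wprod f w u))"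
    by (rule ext) (simp add: sum_distrib_right sum_distrib_left sum.swap[of _ S] mult.assoc)
  also have "\<dots> = (\<lambda>u. \<Sum>i\<in>I. c i * subst f (p i) u)"
  proof (intro ext sum.cong refl)
    fix u i assume "i \<in> I"
    then have "tsupp (p i) \<subseteq> S" by (auto simp: S_def)
    then show "c i * (\<Sum>w\<in>S. p i w * wprod f w u) = c i * subst f (p i) u"
      by (simp add: subst_eq_sum_superset[OF S])
  qed
  finally show ?thesis .
qed

lemma subst_add:
  assumes "finite (tsupp p)" "finite (tsupp q)"
  shows "subst f (\<lambda>u. p u + q u) = (\<lambda>u. subst f p u + subst f q u)"
proof -
  let ?S = "tsupp p \<union> tsupp q"
  have S: "finite ?S" using assms by simp
  have "subst f (\<lambda>u. p u + q u) = (\<lambda>u. \<Sum>w\<in>?S. (p w + q w) * wprod f w u)"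
    by (rule subst_eq_sum_superset[OF S]) (auto simp: tsupp_def)
  also have "\<dots> = (\<lambda>u. subst f p u + subst f q u)"
    by (simp add: subst_eq_sum_superset[OF S, of p] subst_eq_sum_superset[OF S, of q]
        distrib_right sum.distrib)
  finally show ?thesis .
qed

lemma subst_scale:
  assumes "finite (tsupp p)"
  shows "subst f (\<lambda>u. c * p u) = (\<lambda>u. c * subst f p u)"
proof -
  have "subst f (\<lambda>u. c * p u) = (\<lambda>u. \<Sum>w\<in>tsupp p. (c * p w) * wprod f w u)"
    by (rule subst_eq_sum_superset[OF assms]) (auto simp: tsupp_def)
  then show ?thesis
    by (simp add: subst_def sum_distrib_left mult.assoc)
qed

lemma subst_zero: "subst f (\<lambda>_. 0) = (\<lambda>_. 0)"
  by (simp add: subst_def tsupp_def)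

lemma subst_mon: "subst f (mon w) = wprod f w"
  unfolding subst_def tsupp_mon by (simp add: mon_def)

lemma subst_letter: "subst f (mon [x]) = f x"
  by (simp add: subst_mon tmult_mon_Nil_right)

lemma subst_pair: "subst f (mon [x, y]) = tmult (f x) (f y)"
  by (simp add: subst_mon tmult_mon_Nil_right)

lemma tmult_eq_sum_mon:
  assumes "finite (tsupp p)" "finite (tsupp q)"
  shows "tmult p q = (\<lambda>x. \<Sum>(u, w)\<in>tsupp p \<times> tsupp q. (p u * q w) * mon (u @ w) x)"
proof -
  have "tmult p q = tmult (\<lambda>x. \<Sum>u\<in>tsupp p. p u * mon u x) (\<lambda>x. \<Sum>w\<in>tsupp q. q w * mon w x)"
    using assms by (simp add: sum_mon_expansion)
  also have "\<dots> = (\<lambda>x. \<Sum>u\<in>tsupp p. \<Sum>w\<in>tsupp q. (p u * q w) * mon (u @ w) x)"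
    by (simp only: tmult_sum_left tmult_scale_left tmult_sum_right tmult_scale_right tmult_mon_mon)
       (simp add: sum_distrib_left mult.assoc)
  finally show ?thesis by (simp add: sum.cartesian_product)
qed

lemma subst_tmult:
  assumes "finite (tsupp p)" "finite (tsupp q)"
  shows "subst f (tmult p q) = tmult (subst f p) (subst f q)"
proof -
  have "subst f (tmult p q) =
      (\<lambda>x. \<Sum>(u, w)\<in>tsupp p \<times> tsupp q. (p u * q w) * wprod f (u @ w) x)"
    using assms by (simp add: tmult_eq_sum_mon subst_lincomb[unfolded split_def] tsupp_mon
        subst_mon split_def)
  also have "\<dots> = (\<lambda>x. \<Sum>u\<in>tsupp p. \<Sum>w\<in>tsupp q. (p u * q w) * tmult (wprod f u) (wprod f w) x)"
    by (simp add: sum.cartesian_product wprod_append)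
  also have "\<dots> = tmult (subst f p) (subst f q)"
    unfolding subst_def
    by (simp only: tmult_sum_left tmult_scale_left tmult_sum_right tmult_scale_right)
       (simp add: sum_distrib_left mult.assoc)
  finally show ?thesis .
qed

lemma subst_wprod:
  assumes "\<And>x. finite (tsupp (f x))"
  shows "subst g (wprod f w) = wprod (\<lambda>x. subst g (f x)) w"
  by (induction w) (simp_all add: subst_mon subst_tmult assms finite_tsupp_wprod)

lemma subst_subst:
  assumes "finite (tsupp p)" "\<And>x. finite (tsupp (f x))"
  shows "subst g (subst f p) = subst (\<lambda>x. subst g (f x)) p"
  unfolding subst_def[of f p] using assms
  by (simp add: subst_lincomb finite_tsupp_wprod subst_wprod subst_def[of _ p])

lemma subst_eq_self:
  assumes "finite (tsupp p)" "\<And>w x. w \<in> tsupp p \<Longrightarrow> x \<in> set w \<Longrightarrow> f x = mon [x]"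
  shows "subst f p = p"
proof -
  have "subst f p = (\<lambda>u. \<Sum>w\<in>tsupp p. p w * mon w u)"
    unfolding subst_def by (intro ext sum.cong refl) (simp add: wprod_eq_mon assms(2))
  also have "\<dots> = p" using assms(1) by (rule sum_mon_expansion) simp
  finally show ?thesis .
qed

lemma TA_subst:
  assumes "p \<in> TA V lev n" "\<And>x. x \<in> V \<Longrightarrow> 1 \<le> lev x \<Longrightarrow> lev x \<le> n \<Longrightarrow> f x \<in> TA V lev n"
  shows "subst f p \<in> TA V lev n"
  unfolding subst_def using assms
  by (intro TA_lincomb TA_wprod) (auto simp: TA_def)

subsection \<open>The ideal of relations\<close>

lemma RB_finite_tsupp: "x \<in> RB V lev E \<Longrightarrow> finite (tsupp x)"
proof (induction rule: RB.induct)
  case (gen g)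
  then show ?case
    unfolding RB_gens_def by (auto simp: tsupp_mon intro!: finite_tsupp_sum)
next
  case (add x y)
  have "tsupp (\<lambda>u. x u + y u) \<subseteq> tsupp x \<union> tsupp y" by (auto simp: tsupp_def)
  then show ?case by (rule finite_subset) (use add in auto)
next
  case (scale x c)
  have "tsupp (\<lambda>u. c * x u) \<subseteq> tsupp x" by (auto simp: tsupp_def)
  then show ?case by (rule finite_subset) (use scale in auto)
qed (simp_all add: tsupp_def[of "\<lambda>_. 0"] finite_tsupp_tmult tsupp_mon)

lemma RB_lincomb:
  assumes "finite I" "\<And>i. i \<in> I \<Longrightarrow> x i \<in> RB V lev E"
  shows "(\<lambda>u. \<Sum>i\<in>I. c i * x i u) \<in> RB V lev E"
  using assms
proof (induction I rule: finite_induct)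
  case empty then show ?case using RB.zero by simp
next
  case (insert i I)
  then have "(\<lambda>u. c i * x i u + (\<Sum>i\<in>I. c i * x i u)) \<in> RB V lev E"
    by (intro RB.add RB.scale) auto
  then show ?case using insert by simp
qed

lemma RB_tmult_letters_left:
  assumes "x \<in> RB V lev E" "finite S" "\<And>v. v \<in> S \<Longrightarrow> v \<in> V \<and> 1 \<le> lev v"
  shows "tmult (\<lambda>u. \<Sum>v\<in>S. c v * mon [v] u) x \<in> RB V lev E"
  unfolding tmult_sum_left tmult_scale_left using assms by (intro RB_lincomb RB.lmult) auto

lemma RB_tmult_letters_right:
  assumes "x \<in> RB V lev E" "finite S" "\<And>v. v \<in> S \<Longrightarrow> v \<in> V \<and> 1 \<le> lev v"
  shows "tmult x (\<lambda>u. \<Sum>v\<in>S. c v * mon [v] u) \<in> RB V lev E"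
  unfolding tmult_sum_right tmult_scale_right using assms by (intro RB_lincomb RB.rmult) auto

lemma RB_of_nonedges:
  assumes "finite (tsupp (x :: 'v list \<Rightarrow> 'a::field))"
    and "\<And>w. w \<in> tsupp x \<Longrightarrow>
      \<exists>y z. w = [y, z] \<and> y \<in> V \<and> z \<in> V \<and> 1 \<le> lev y \<and> 1 \<le> lev z \<and> (y, z) \<notin> E"
  shows "x \<in> RB V lev E"
proof -
  have "(mon w :: 'v list \<Rightarrow> 'a) \<in> RB V lev E" if "w \<in> tsupp x" for w
  proof (rule RB.gen)
    show "mon w \<in> RB_gens V lev E"
      using assms(2)[OF that] unfolding RB_gens_def by blast
  qed
  then have "(\<lambda>u. \<Sum>w\<in>tsupp x. x w * mon w u) \<in> RB V lev E"
    by (intro RB_lincomb[OF assms(1)])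
  then show ?thesis using sum_mon_expansion[OF assms(1), of x] by simp
qed

lemma tmult_RB_of_nonedges:
  assumes "finite (tsupp p)" "finite (tsupp q)"
    and "tsupp p \<subseteq> (\<lambda>y. [y]) ` Y" "tsupp q \<subseteq> (\<lambda>z. [z]) ` Z"
    and "\<And>y. y \<in> Y \<Longrightarrow> y \<in> V \<and> 1 \<le> lev y" "\<And>z. z \<in> Z \<Longrightarrow> z \<in> V \<and> 1 \<le> lev z"
    and "\<And>y z. y \<in> Y \<Longrightarrow> z \<in> Z \<Longrightarrow> (y, z) \<notin> E"
  shows "tmult p q \<in> RB V lev E"
proof (rule RB_of_nonedges)
  show "finite (tsupp (tmult p q))" using assms(1,2) by (rule finite_tsupp_tmult)
  fix x assume "x \<in> tsupp (tmult p q)"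
  then have "x \<in> (\<lambda>(u, w). u @ w) ` (tsupp p \<times> tsupp q)"
    using tsupp_tmult by (rule subsetD[rotated])
  then obtain u w where "x = u @ w" "u \<in> tsupp p" "w \<in> tsupp q" by auto
  moreover from this obtain y z where "u = [y]" "y \<in> Y" "w = [z]" "z \<in> Z"
    using assms(3,4) by blast
  ultimately show "\<exists>y z. x = [y, z] \<and> y \<in> V \<and> z \<in> V \<and> 1 \<le> lev y \<and> 1 \<le> lev z \<and> (y, z) \<notin> E"
    using assms(5-7) by auto
qed

text \<open>An invariant of \<open>R\<^sub>B\<close> read off from its degree-two generators; it is all that is needed
  to compute the kernels \<open>\<kappa>\<close>.\<close>

definition row_constant_on_edges :: "('v \<times> 'v) set \<Rightarrow> ('v list \<Rightarrow> 'a::field) \<Rightarrow> bool" where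
  "row_constant_on_edges E x \<longleftrightarrow> x [] = 0 \<and> (\<forall>a. x [a] = 0) \<and>
     (\<exists>k. \<forall>v w. (v, w) \<in> E \<longrightarrow> x [v, w] = k v)"

lemma tmult_apply_Nil: "tmult p q [] = p [] * q []"
  by (simp add: tmult_def)

lemma tmult_apply_single: "tmult p q [a] = p [] * q [a] + p [a] * q []"
  by (simp add: tmult_def atLeast0AtMost atMost_Suc)

lemma tmult_apply_pair: "tmult p q [a, b] = p [] * q [a, b] + p [a] * q [b] + p [a, b] * q []"
  by (simp add: tmult_def atLeast0AtMost atMost_Suc)

lemma row_constant_on_edges_RB_gens:
  assumes "g \<in> RB_gens V lev E"
  shows "row_constant_on_edges E (g :: 'v list \<Rightarrow> 'a::field)"
proof -
  from assms consider v w where "g = mon [v, w]" "(v, w) \<notin> E"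
    | v where "g = (\<lambda>u. \<Sum>w\<in>succs E v. mon [v, w] u)"
    unfolding RB_gens_def by auto
  then show ?thesis
  proof cases
    case 1
    then show ?thesis unfolding row_constant_on_edges_def
      by (intro conjI allI exI[of _ "\<lambda>_. 0"]) (auto simp: mon_def)
  next
    case 2
    have "(\<Sum>w\<in>succs E v. mon [v, w] [v', w']) =
        (if v' = v \<and> finite (succs E v) then 1 else 0 :: 'a)" if "(v', w') \<in> E" for v' w'
    proof (cases "finite (succs E v)")
      case True
      have "(\<Sum>w\<in>succs E v. mon [v, w] [v', w']) =
          (\<Sum>w\<in>succs E v. if w = w' then (if v' = v then 1 else 0) else 0 :: 'a)"
        by (intro sum.cong) (auto simp: mon_def)
      also have "\<dots> = (if v' = v \<and> finite (succs E v) then 1 else 0)"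
        using True that by (auto simp: succs_def)
      finally show ?thesis .
    qed simp
    then show ?thesis unfolding row_constant_on_edges_def 2
      by (intro conjI allI exI[of _ "\<lambda>v'. if v' = v \<and> finite (succs E v) then 1 else 0"])
        (simp_all add: mon_def)
  qed
qed

lemma row_constant_on_edges_add:
  "row_constant_on_edges E x \<Longrightarrow> row_constant_on_edges E y \<Longrightarrow>
   row_constant_on_edges E (\<lambda>u. x u + y u)"
  unfolding row_constant_on_edges_def
proof (elim conjE exE, intro conjI exI allI impI)
  fix k1 k2 v w
  assume "\<forall>v w. (v, w) \<in> E \<longrightarrow> x [v, w] = k1 v" "\<forall>v w. (v, w) \<in> E \<longrightarrow> y [v, w] = k2 v"
    "(v, w) \<in> E"
  then show "x [v, w] + y [v, w] = k1 v + k2 v" by simp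
qed simp_all

lemma row_constant_on_edges_scale:
  "row_constant_on_edges E x \<Longrightarrow> row_constant_on_edges E (\<lambda>u. c * x u)"
  unfolding row_constant_on_edges_def by (elim conjE exE, intro conjI exI[of _ "\<lambda>v. c * _ v"]) auto

lemma row_constant_on_edges_tmult_letter:
  assumes "row_constant_on_edges E x"
  shows "row_constant_on_edges E (tmult (mon [a]) x)" "row_constant_on_edges E (tmult x (mon [a]))"
  using assms unfolding row_constant_on_edges_def
  by (intro conjI allI exI[of _ "\<lambda>_. 0"];
      simp add: tmult_apply_Nil tmult_apply_single tmult_apply_pair mon_def)+

lemma RB_row_constant_on_edges:
  "x \<in> RB V lev E \<Longrightarrow> row_constant_on_edges E (x :: 'v list \<Rightarrow> 'a::field)"
proof (induction rule: RB.induct)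
  case zero
  show ?case unfolding row_constant_on_edges_def by (intro conjI allI exI[of _ "\<lambda>_. 0"]) simp_all
next
  case (gen g)
  then show ?case by (rule row_constant_on_edges_RB_gens)
next
  case (add x y)
  with row_constant_on_edges_add show ?case by blast
next
  case (scale x c)
  with row_constant_on_edges_scale show ?case by blast
next
  case (lmult x v)
  then show ?case by (simp add: row_constant_on_edges_tmult_letter)
next
  case (rmult x v)
  then show ?case by (simp add: row_constant_on_edges_tmult_letter)
qed

subsection \<open>Linear algebra\<close>

context vector_space
begin

lemma dim_mono_of_finite_span:
  assumes "S \<subseteq> T" "T \<subseteq> span W" "finite W"
  shows "dim S \<le> dim T"
proof -
  obtain B where B: "B \<subseteq> S" "independent B" "S \<subseteq> span B" "card B = dim S"
    by (rule basis_exists)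
  obtain C where C: "C \<subseteq> T" "independent C" "T \<subseteq> span C" "card C = dim T"
    by (rule basis_exists)
  have "finite C" using independent_span_bound[OF assms(3) C(2)] C(1) assms(2) by auto
  moreover have "B \<subseteq> span C" using B(1) assms(1) C(3) by auto
  ultimately have "card B \<le> card C" using independent_span_bound[OF _ B(2)] by auto
  then show ?thesis using B(4) C(4) by simp
qed

lemma span_superset_of_card_le:
  assumes B: "independent B" "B \<subseteq> span T" and T: "finite T" "independent T"
    and card: "card T \<le> card B"
  shows "T \<subseteq> span B"
proof
  fix t assume t: "t \<in> T"
  show "t \<in> span B"
  proof (rule ccontr)
    assume nt: "t \<notin> span B"
    then have "independent (insert t B)" using B(1) independent_insertI by blast
    moreover have "insert t B \<subseteq> span T" using t B(2) span_base by blast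
    ultimately have "finite (insert t B) \<and> card (insert t B) \<le> card T"
      by (rule independent_span_bound[OF T(1)])
    moreover have "t \<notin> B" using nt span_base by blast
    ultimately have "card B + 1 \<le> card T" using card_insert_disjoint[of B t] by auto
    then show False using card by simp
  qed
qed

lemma subset_subspace_of_dim_le:
  assumes "S \<subseteq> T" "T \<subseteq> span W" "finite W" "dim T \<le> dim S" "subspace S"
  shows "T \<subseteq> S"
proof -
  obtain B where B: "B \<subseteq> S" "independent B" "S \<subseteq> span B" "card B = dim S"
    by (rule basis_exists)
  obtain C where C: "C \<subseteq> T" "independent C" "T \<subseteq> span C" "card C = dim T"
    by (rule basis_exists)
  have "C \<subseteq> span W" using C(1) assms(2) by blast
  then have "finite C" using independent_span_bound[OF assms(3) C(2)] by blast
  moreover have "B \<subseteq> span C" using B(1) assms(1) C(3) by blast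
  moreover have "card C \<le> card B" using assms(4) B(4) C(4) by simp
  ultimately have "C \<subseteq> span B" using span_superset_of_card_le B(2) C(2) by blast
  then have "T \<subseteq> span B" using C(3) span_mono span_span by blast
  also have "span B \<subseteq> S" using B(1) assms(5) by (rule span_minimal)
  finally show ?thesis .
qed

end

global_interpretation fv: vector_space "\<lambda>(c::'a::field) (f::'b \<Rightarrow> 'a) x. c * f x"
  by unfold_locales (simp_all add: fun_eq_iff algebra_simps)

lemma fv_independent_disjoint_supports:
  fixes F :: "('b \<Rightarrow> 'a::field) set"
  assumes "finite F" "0 \<notin> F" "\<And>f g x. f \<in> F \<Longrightarrow> g \<in> F \<Longrightarrow> f \<noteq> g \<Longrightarrow> f x \<noteq> 0 \<Longrightarrow> g x = 0"
  shows "fv.independent F"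
proof (rule fv.independent_if_scalars_zero[OF assms(1)])
  fix c :: "('b \<Rightarrow> 'a) \<Rightarrow> 'a" and f
  assume sum: "(\<Sum>g\<in>F. (\<lambda>x. c g * g x)) = 0" and f: "f \<in> F"
  obtain x where x: "f x \<noteq> 0" using f assms(2) by (metis zero_fun_def ext)
  have "0 = (\<Sum>g\<in>F. c g * g x)" using fun_cong[OF sum, of x] by (simp add: sum_fun_apply)
  also have "\<dots> = c f * f x + (\<Sum>g\<in>F - {f}. c g * g x)"
    by (rule sum.remove[OF assms(1) f])
  also have "(\<Sum>g\<in>F - {f}. c g * g x) = 0"
    using assms(3) f x by (intro sum.neutral) auto
  finally show "c f = 0" using x by simp
qed

lemma delta_apply: "delta a x = (if x = a then 1 else 0)"
  by (simp add: delta_def)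

lemma inj_delta: "inj (delta :: 'b \<Rightarrow> 'b \<Rightarrow> 'a::field)"
  by (rule injI) (metis delta_apply one_neq_zero)

lemma fv_independent_delta: "finite S \<Longrightarrow> fv.independent (delta ` S :: ('b \<Rightarrow> 'a::field) set)"
  by (rule fv_independent_disjoint_supports) (auto simp: delta_apply fun_eq_iff split: if_splits)

lemma sum_mult_delta:
  assumes "finite S" "supported_on f S"
  shows "(\<Sum>y\<in>S. f y * delta y x) = f x"
proof -
  have "(\<Sum>y\<in>S. f y * delta y x) = (\<Sum>y\<in>S. if y = x then f x else 0)"
    by (intro sum.cong) (auto simp: delta_apply)
  also have "\<dots> = f x" using assms by (auto simp: supported_on_def)
  finally show ?thesis .
qed

lemma supported_on_in_span_delta:
  fixes c :: "'b \<Rightarrow> 'a::field"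
  assumes "supported_on c S" "finite S"
  shows "c \<in> fv.span (delta ` S)"
proof -
  have "c = (\<Sum>s\<in>S. (\<lambda>x. c s * delta s x))"
    using sum_mult_delta[OF assms(2,1)] by (simp add: fun_eq_iff sum_fun_apply)
  also have "\<dots> \<in> fv.span (delta ` S)"
    by (intro fv.span_sum) (auto intro: fv.span_scale[of _ _ "c s" for s, simplified] fv.span_base)
  finally show ?thesis .
qed

lemma supported_on_add: "supported_on x S \<Longrightarrow> supported_on y S \<Longrightarrow> supported_on (x + y) S"
  unfolding supported_on_def plus_fun_def by (metis add.right_neutral)

lemma right_inverse_if_left_inverse:
  fixes \<phi> \<gamma> :: "'v \<Rightarrow> 'v \<Rightarrow> 'a::field"
  assumes S: "finite S"
    and indep: "\<And>c y. (\<And>z. (\<Sum>x\<in>S. c x * \<phi> x z) = 0) \<Longrightarrow> y \<in> S \<Longrightarrow> c y = 0"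
    and left: "\<And>w z. w \<in> S \<Longrightarrow> (\<Sum>y\<in>S. \<gamma> w y * \<phi> y z) = delta w z"
    and supp: "\<And>v. v \<in> S \<Longrightarrow> supported_on (\<phi> v) S \<and> supported_on (\<gamma> v) S"
    and v: "v \<in> S"
  shows "(\<Sum>y\<in>S. \<phi> v y * \<gamma> y z) = delta v z"
proof -
  define e where "e z = (\<Sum>y\<in>S. \<phi> v y * \<gamma> y z) - delta v z" for z
  have "(\<Sum>x\<in>S. e x * \<phi> x t) = 0" for t
  proof -
    have "(\<Sum>x\<in>S. (\<Sum>y\<in>S. \<phi> v y * \<gamma> y x) * \<phi> x t) =
        (\<Sum>x\<in>S. \<Sum>y\<in>S. \<phi> v y * \<gamma> y x * \<phi> x t)"
      by (simp add: sum_distrib_right)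
    also have "\<dots> = (\<Sum>y\<in>S. \<Sum>x\<in>S. \<phi> v y * \<gamma> y x * \<phi> x t)"
      by (rule sum.swap)
    also have "\<dots> = (\<Sum>y\<in>S. \<phi> v y * (\<Sum>x\<in>S. \<gamma> y x * \<phi> x t))"
      by (simp add: sum_distrib_left mult.assoc)
    also have "\<dots> = (\<Sum>y\<in>S. \<phi> v y * delta y t)" by (simp add: left)
    also have "\<dots> = \<phi> v t"
      using supp[OF v] S by (simp add: sum_mult_delta)
    also have "\<dots> = (\<Sum>x\<in>S. if x = v then \<phi> v t else 0)"
      using v S by simp
    also have "\<dots> = (\<Sum>x\<in>S. delta v x * \<phi> x t)"
      by (intro sum.cong) (auto simp: delta_apply)
    finally show ?thesis by (simp add: e_def left_diff_distrib sum_subtractf)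
  qed
  then have "e z = 0" if "z \<in> S" for z using indep that by blast
  moreover have "e z = 0" if "z \<notin> S"
  proof -
    have "\<gamma> y z = 0" if "y \<in> S" for y
      using supp[OF that] \<open>z \<notin> S\<close> unfolding supported_on_def by blast
    then show ?thesis using v that by (auto simp: e_def delta_apply)
  qed
  ultimately show ?thesis by (cases "z \<in> S") (auto simp: e_def)
qed

lemma in_lin_span_iff_span: "in_lin_span c b i \<longleftrightarrow> c \<in> fv.span (b ` {..<i})"
proof
  assume "in_lin_span c b i"
  then obtain \<alpha> where "\<And>v. c v = (\<Sum>j<i. \<alpha> j * b j v)" by (auto simp: in_lin_span_def)
  then have "c = (\<Sum>j<i. (\<lambda>v. \<alpha> j * b j v))" by (simp add: fun_eq_iff sum_fun_apply)
  also have "\<dots> \<in> fv.span (b ` {..<i})"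
    by (intro fv.span_sum) (auto intro: fv.span_scale[of _ _ "\<alpha> j" for j, simplified] fv.span_base)
  finally show "c \<in> fv.span (b ` {..<i})" .
next
  assume "c \<in> fv.span (b ` {..<i})"
  then show "in_lin_span c b i"
  proof (induction rule: fv.span_induct_alt)
    case base then show ?case by (auto simp: in_lin_span_def intro: exI[of _ "\<lambda>_. 0"])
  next
    case (step a x y)
    then obtain j where j: "j < i" "x = b j" by blast
    from step obtain \<alpha> where \<alpha>: "\<And>v. y v = (\<Sum>j<i. \<alpha> j * b j v)" by (auto simp: in_lin_span_def)
    define \<beta> where "\<beta> l = \<alpha> l + (if l = j then a else 0)" for l
    have "a * x v + y v = (\<Sum>l<i. \<beta> l * b l v)" for v
      using j by (simp add: \<beta>_def \<alpha> distrib_right sum.distrib if_distrib[of "\<lambda>z. z * _"] cong: if_cong)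
    then show ?case unfolding in_lin_span_def by (intro exI[of _ \<beta>]) simp
  qed
qed

lemma bij_betw_preserving_fibres:
  assumes A: "finite A" and B: "finite B"
    and card: "\<And>x. card {a\<in>A. f a = x} = card {b\<in>B. g b = x}"
  obtains h where "bij_betw h A B" "\<And>a. a \<in> A \<Longrightarrow> g (h a) = f a"
proof -
  have "\<exists>hx. bij_betw hx {a\<in>A. f a = x} {b\<in>B. g b = x}" for x
    using card A B by (intro finite_same_card_bij) auto
  then obtain H where H: "\<And>x. bij_betw (H x) {a\<in>A. f a = x} {b\<in>B. g b = x}" by metis
  define h where "h a = H (f a) a" for a
  have hA: "h a \<in> B \<and> g (h a) = f a" if "a \<in> A" for a
    using H that unfolding h_def bij_betw_def by blast
  have "inj_on h A"
  proof (rule inj_onI)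
    fix a a' assume a: "a \<in> A" "a' \<in> A" "h a = h a'"
    then have "f a = f a'" using hA by metis
    moreover have "inj_on (H (f a)) {x\<in>A. f x = f a}" using H[of "f a"] by (simp add: bij_betw_def)
    ultimately show "a = a'" using a by (auto simp: h_def dest: inj_onD)
  qed
  moreover have "B \<subseteq> h ` A"
  proof
    fix y assume "y \<in> B"
    then have "y \<in> H (g y) ` {a\<in>A. f a = g y}" using H[of "g y"] by (simp add: bij_betw_def)
    then show "y \<in> h ` A" by (force simp: h_def)
  qed
  ultimately have "bij_betw h A B" using hA by (auto simp: bij_betw_def)
  with hA show thesis using that by blast
qed

lemma emb_eq_sum_mon:
  assumes "supported_on a S" "finite S"
  shows "emb a = (\<lambda>u. \<Sum>v\<in>S. a v * mon [v] u)"
proof (rule ext)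
  fix u
  show "emb a u = (\<Sum>v\<in>S. a v * mon [v] u)"
  proof (cases "\<exists>x. u = [x]")
    case True
    then obtain x where u: "u = [x]" by blast
    have "(\<Sum>v\<in>S. a v * mon [v] u) = (\<Sum>v\<in>S. if v = x then a x else 0)"
      by (intro sum.cong) (auto simp: mon_def u)
    also have "\<dots> = a x" using assms by (auto simp: supported_on_def)
    finally show ?thesis by (simp add: emb_def u)
  next
    case False
    then show ?thesis by (auto simp: mon_def emb_def split: list.split)
  qed
qed

lemma emb_delta: "emb (delta a) = (mon [a] :: 'v list \<Rightarrow> 'a::field)"
  by (rule ext) (simp add: emb_def delta_def mon_def split: list.split)

lemma tmult_emb_emb_pair: "tmult (emb a) (emb c) [v, w] = a v * c w"
  by (simp add: tmult_apply_pair emb_def)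

lemma sum_emb: "(\<lambda>u. \<Sum>y\<in>S. c y * emb (e y) u) = emb (\<lambda>z. \<Sum>y\<in>S. c y * e y z)"
  by (rule ext) (simp add: emb_def split: list.split)

subsection \<open>The kernels \<open>\<kappa>\<close>\<close>

locale top_layer =
  fixes V :: "'v set" and lev :: "'v \<Rightarrow> nat" and E :: "('v \<times> 'v) set" and n :: nat
  assumes layered: "layered_graph V lev E" and two_le_n: "2 \<le> n"
begin

abbreviation "Vn \<equiv> layer V lev n"
abbreviation "Vm \<equiv> layer V lev (n - 1)"

lemma finite_V: "finite V"
  using layered by (simp add: layered_graph_def)

lemma finite_layer: "finite (layer V lev i)"
  using finite_V by (simp add: layer_def)

lemma edge_levels: "(v, w) \<in> E \<Longrightarrow> v \<in> V \<and> w \<in> V \<and> lev w + 1 = lev v"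
  using layered by (simp add: layered_graph_def)

lemma succs_top_nonempty: "v \<in> Vn \<Longrightarrow> \<exists>w. (v, w) \<in> E"
  using layered two_le_n by (auto simp: layered_graph_def succs_def layer_def)

lemma succs_top_subset: "v \<in> Vn \<Longrightarrow> succs E v \<subseteq> Vm"
  using edge_levels by (fastforce simp: succs_def layer_def)

lemma finite_succs: "finite (succs E v)"
  by (rule finite_subset[OF _ finite_V]) (auto simp: succs_def dest: edge_levels)

definition succ_const :: "'v set \<Rightarrow> ('v \<Rightarrow> 'a::field) set" where
  "succ_const A = {c. supported_on c Vm \<and>
     (\<forall>v\<in>A. \<forall>w w'. (v, w) \<in> E \<longrightarrow> (v, w') \<in> E \<longrightarrow> c w = c w')}"

lemma succ_const_antimono: "A \<subseteq> B \<Longrightarrow> succ_const B \<subseteq> succ_const A"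
  unfolding succ_const_def by blast

lemma succ_const_iff: "c \<in> succ_const A \<longleftrightarrow> supported_on c Vm \<and> (\<forall>x\<in>A. c \<in> succ_const {x})"
  by (auto simp: succ_const_def)

lemma subspace_succ_const: "fv.subspace (succ_const A :: ('v \<Rightarrow> 'a::field) set)"
  unfolding fv.subspace_def
proof (intro conjI ballI allI)
  fix x y :: "'v \<Rightarrow> 'a" and c assume x: "x \<in> succ_const A" and y: "y \<in> succ_const A"
  have eq: "x w = x w' \<and> y w = y w'" if "v \<in> A" "(v, w) \<in> E" "(v, w') \<in> E" for v w w'
    using x y that unfolding succ_const_def by blast
  have supp: "supported_on x Vm" "supported_on y Vm" using x y by (simp_all add: succ_const_def)
  show "x + y \<in> succ_const A"
    unfolding succ_const_def mem_Collect_eq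
  proof (intro conjI ballI allI impI)
    show "supported_on (x + y) Vm" using supp by (rule supported_on_add)
    fix v w w' assume "v \<in> A" "(v, w) \<in> E" "(v, w') \<in> E"
    with eq[OF this] show "(x + y) w = (x + y) w'" by simp
  qed
  show "(\<lambda>v. c * x v) \<in> succ_const A"
    unfolding succ_const_def mem_Collect_eq
  proof (intro conjI ballI allI impI)
    show "supported_on (\<lambda>v. c * x v) Vm" using supp(1) by (simp add: supported_on_def)
    fix v w w' assume "v \<in> A" "(v, w) \<in> E" "(v, w') \<in> E"
    with eq[OF this] show "c * x w = c * x w'" by simp
  qed
qed (simp add: succ_const_def supported_on_def)

text \<open>Multiplying \<open>v \<in> V\<^sub>n\<close> by an element of \<open>B\<^sub>n\<^sub>-\<^sub>1\<close> that is constant on \<open>S(v)\<close> gives a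
  multiple of the relation \<open>v \<Sum>S(v)\<close> plus non-edge monomials.\<close>

lemma tmult_mon_emb_RB:
  assumes v: "v \<in> Vn" and c: "c \<in> succ_const {v}"
  shows "tmult (mon [v]) (emb c) \<in> RB V lev E"
proof -
  have vV: "v \<in> V" "lev v = n" using v by (auto simp: layer_def)
  obtain w0 where w0: "(v, w0) \<in> E" using succs_top_nonempty[OF v] by blast
  let ?S = "succs E v"
  have SV: "?S \<subseteq> Vm" by (rule succs_top_subset[OF v])
  have csupp: "supported_on c Vm"
    and cconst: "\<And>w. w \<in> ?S \<Longrightarrow> c w = c w0"
    using c w0 unfolding succ_const_def succs_def by blast+
  have "(\<lambda>u. \<Sum>w\<in>?S. mon [v, w] u) \<in> RB_gens V lev E"
    unfolding RB_gens_def using vV two_le_n by auto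
  then have G: "(\<lambda>u. \<Sum>w\<in>?S. mon [v, w] u) \<in> RB V lev E" by (rule RB.gen)
  have R: "(\<lambda>u. \<Sum>w\<in>Vm - ?S. c w * mon [v, w] u) \<in> RB V lev E"
  proof (rule RB_lincomb)
    fix w assume "w \<in> Vm - ?S"
    then have "mon [v, w] \<in> RB_gens V lev E"
      unfolding RB_gens_def using vV two_le_n by (auto simp: layer_def succs_def)
    then show "mon [v, w] \<in> RB V lev E" by (rule RB.gen)
  qed (simp add: finite_layer)
  have "tmult (mon [v]) (emb c) = (\<lambda>u. \<Sum>w\<in>Vm. c w * mon [v, w] u)"
    by (simp add: emb_eq_sum_mon[OF csupp finite_layer] tmult_sum_right tmult_scale_right
        tmult_mon_mon)
  also have "\<dots> = (\<lambda>u. (\<Sum>w\<in>?S. c w * mon [v, w] u) + (\<Sum>w\<in>Vm - ?S. c w * mon [v, w] u))"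
    by (rule ext, subst sum.subset_diff[OF SV finite_layer]) (simp add: add.commute)
  also have "\<dots> = (\<lambda>u. c w0 * (\<Sum>w\<in>?S. mon [v, w] u) + (\<Sum>w\<in>Vm - ?S. c w * mon [v, w] u))"
    unfolding sum_distrib_left by (intro ext arg_cong2[where f="(+)"] sum.cong refl) (simp only: cconst)
  also have "\<dots> \<in> RB V lev E" by (intro RB.add RB.scale G R)
  finally show ?thesis .
qed

lemma kappa_eq_succ_const:
  fixes a :: "'v \<Rightarrow> 'a::field"
  assumes a: "supported_on a Vn"
  shows "kappa V lev E n a = succ_const {v. a v \<noteq> 0}"
proof (intro equalityI subsetI)
  fix c :: "'v \<Rightarrow> 'a" assume "c \<in> kappa V lev E n a"
  then have c: "supported_on c Vm" and R: "tmult (emb a) (emb c) \<in> RB V lev E"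
    by (auto simp: kappa_def)
  from RB_row_constant_on_edges[OF R] obtain k where "\<And>v w. (v, w) \<in> E \<Longrightarrow> a v * c w = k v"
    unfolding row_constant_on_edges_def tmult_emb_emb_pair by blast
  then have "c w = c w'" if "a v \<noteq> 0" "(v, w) \<in> E" "(v, w') \<in> E" for v w w'
    using that by (metis mult_left_cancel)
  then show "c \<in> succ_const {v. a v \<noteq> 0}" using c unfolding succ_const_def by blast
next
  fix c :: "'v \<Rightarrow> 'a" assume c: "c \<in> succ_const {v. a v \<noteq> 0}"
  let ?A = "{v \<in> Vn. a v \<noteq> 0}"
  have "tmult (emb a) (emb c) = (\<lambda>u. \<Sum>v\<in>Vn. a v * tmult (mon [v]) (emb c) u)"
    by (simp only: emb_eq_sum_mon[OF a finite_layer] tmult_sum_left tmult_scale_left)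
  also have "\<dots> = (\<lambda>u. \<Sum>v\<in>?A. a v * tmult (mon [v]) (emb c) u)"
    by (rule ext, rule sum.mono_neutral_right) (auto simp: finite_layer)
  also have "\<dots> \<in> RB V lev E"
    using c by (intro RB_lincomb tmult_mon_emb_RB) (auto simp: finite_layer succ_const_def)
  finally show "c \<in> kappa V lev E n a" using c by (simp add: kappa_def succ_const_def)
qed

lemma kappa_delta:
  assumes "a \<in> Vn"
  shows "kappa V lev E n (delta a :: 'v \<Rightarrow> 'a::field) = succ_const {a}"
proof -
  have "{v. (delta a :: 'v \<Rightarrow> 'a) v \<noteq> 0} = {a}" by (auto simp: delta_apply)
  moreover have "supported_on (delta a :: 'v \<Rightarrow> 'a) Vn"
    using assms by (simp add: supported_on_def delta_apply)
  ultimately show ?thesis by (simp add: kappa_eq_succ_const)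
qed

lemma subspace_kappa: "supported_on (a :: 'v \<Rightarrow> 'a::field) Vn \<Longrightarrow> fv.subspace (kappa V lev E n a)"
  by (simp add: kappa_eq_succ_const subspace_succ_const)

lemma kappa_subset_span: "kappa V lev E n a \<subseteq> fv.span (delta ` Vm)"
  using supported_on_in_span_delta finite_layer by (auto simp: kappa_def)

lemma kappa_subset_kappa_delta:
  fixes a :: "'v \<Rightarrow> 'a::field"
  assumes "supported_on a Vn" "a u \<noteq> 0"
  shows "kappa V lev E n a \<subseteq> kappa V lev E n (delta u :: 'v \<Rightarrow> 'a)"
proof -
  have "u \<in> Vn" using assms by (simp add: supported_on_def)
  have "kappa V lev E n a = succ_const {v. a v \<noteq> 0}" by (rule kappa_eq_succ_const[OF assms(1)])
  also have "\<dots> \<subseteq> succ_const {u}" using assms(2) by (intro succ_const_antimono) auto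
  also have "\<dots> = kappa V lev E n (delta u :: 'v \<Rightarrow> 'a)" by (rule kappa_delta[OF \<open>u \<in> Vn\<close>, symmetric])
  finally show ?thesis .
qed

lemma dim_kappa_le_dim_kappa_delta:
  fixes a :: "'v \<Rightarrow> 'a::field"
  assumes "supported_on a Vn" "a u \<noteq> 0"
  shows "fv.dim (kappa V lev E n a) \<le> fv.dim (kappa V lev E n (delta u :: 'v \<Rightarrow> 'a))"
  using fv.dim_mono_of_finite_span[OF kappa_subset_kappa_delta[OF assms] kappa_subset_span]
  by (simp add: finite_layer)

definition succ_indicator :: "'v \<Rightarrow> 'v \<Rightarrow> 'a::field" where
  "succ_indicator a w = (if w \<in> succs E a then 1 else 0)"

lemma succ_indicator_in_succ_const: "a \<in> Vn \<Longrightarrow> succ_indicator a \<in> succ_const {a}"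
  using succs_top_subset
  by (auto simp: succ_const_def succ_indicator_def supported_on_def succs_def split: if_splits)

lemma succ_const_single_decomposition:
  assumes a: "a \<in> Vn" and c: "c \<in> succ_const {a}" and s0: "s0 \<in> succs E a"
  shows "c = (\<lambda>x. c s0 * succ_indicator a x) + (\<Sum>w\<in>Vm - succs E a. (\<lambda>x. c w * delta w x))"
proof
  fix x
  have "(\<Sum>w\<in>Vm - succs E a. c w * delta w x) = (if x \<in> Vm - succs E a then c x else 0)"
    using finite_layer by (simp add: delta_apply if_distrib[of "(*) _"] cong: if_cong)
  moreover have "c x = 0" if "x \<notin> Vm" using c that by (auto simp: succ_const_def supported_on_def)
  moreover have "c x = c s0" if "x \<in> succs E a"
    using c s0 that unfolding succ_const_def succs_def by blast
  ultimately show "c x = ((\<lambda>x. c s0 * succ_indicator a x) + (\<Sum>w\<in>Vm - succs E a. (\<lambda>x. c w * delta w x))) x"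
    using succs_top_subset[OF a] by (auto simp: succ_indicator_def sum_fun_apply)
qed

text \<open>A basis of \<open>\<kappa>\<^sub>a\<close> is the indicator of \<open>S(a)\<close> together with the \<open>\<delta>\<^sub>w\<close>, \<open>w \<in> V\<^sub>n\<^sub>-\<^sub>1 - S(a)\<close>.\<close>

lemma dim_kappa_delta:
  assumes a: "a \<in> Vn"
  shows "fv.dim (kappa V lev E n (delta a :: 'v \<Rightarrow> 'a::field)) = card (Vm - succs E a) + 1"
proof -
  let ?S = "succs E a"
  let ?ind = "succ_indicator a :: 'v \<Rightarrow> 'a"
  define B where "B = insert ?ind (delta ` (Vm - ?S))"
  obtain s0 where s0: "s0 \<in> ?S" using succs_top_nonempty[OF a] by (auto simp: succs_def)
  have ind_notin: "?ind \<notin> delta ` (Vm - ?S)"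
  proof
    assume "?ind \<in> delta ` (Vm - ?S)"
    then obtain w where "w \<notin> ?S" "?ind = delta w" by blast
    then have "?ind s0 = delta w s0" by simp
    then show False using s0 \<open>w \<notin> ?S\<close> by (auto simp: succ_indicator_def delta_apply split: if_splits)
  qed
  have card_B: "card B = card (Vm - ?S) + 1"
    unfolding B_def using ind_notin finite_layer by (simp add: card_image inj_on_subset[OF inj_delta])
  have B_sub: "B \<subseteq> succ_const {a}"
    using succ_indicator_in_succ_const[OF a]
    by (auto simp: B_def succ_const_def delta_apply supported_on_def succs_def split: if_splits)
  have sub_B: "succ_const {a} \<subseteq> fv.span B"
  proof
    fix c :: "'v \<Rightarrow> 'a" assume "c \<in> succ_const {a}"
    then have "c = (\<lambda>x. c s0 * ?ind x) + (\<Sum>w\<in>Vm - ?S. (\<lambda>x. c w * delta w x))"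
      by (rule succ_const_single_decomposition[OF a _ s0])
    also have "\<dots> \<in> fv.span B"
      by (intro fv.span_add fv.span_sum fv.span_scale[of _ _ "c _", simplified] fv.span_base)
        (auto simp: B_def)
    finally show "c \<in> fv.span B" .
  qed
  have "fv.independent B"
  proof (rule fv_independent_disjoint_supports)
    show "finite B" using finite_layer by (simp add: B_def)
    have "?ind s0 \<noteq> 0" "delta w w \<noteq> (0 :: 'a)" for w
      using s0 by (simp_all add: succ_indicator_def delta_apply)
    then show "0 \<notin> B" unfolding B_def by (metis image_iff insert_iff zero_fun_def)
  qed (auto simp: B_def succ_indicator_def delta_apply split: if_splits)
  then have "card B = fv.dim (succ_const {a} :: ('v \<Rightarrow> 'a) set)"
    by (rule fv.basis_card_eq_dim[OF B_sub sub_B])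
  then show ?thesis using card_B kappa_delta[OF a, where 'a='a] by simp
qed


subsection \<open>Substituting the top layer\<close>

text \<open>Vertices above level \<open>n\<close> do not occur in \<open>B(\<Gamma>|\<^sub>n)\<close>; \<open>top_map\<close> sends them to \<open>0\<close>.\<close>

definition top_map :: "('v \<Rightarrow> 'v \<Rightarrow> 'a) \<Rightarrow> 'v \<Rightarrow> 'v list \<Rightarrow> 'a::field" where
  "top_map \<phi> v = (if v \<in> V \<and> 1 \<le> lev v \<and> lev v < n then mon [v]
     else if v \<in> Vn then emb (\<phi> v) else (\<lambda>_. 0))"

definition top_letters :: "'v \<Rightarrow> 'v set" where
  "top_letters v = (if v \<in> V \<and> 1 \<le> lev v \<and> lev v < n then {v} else if v \<in> Vn then Vn else {})"

definition kappa_compatible :: "('v \<Rightarrow> 'v \<Rightarrow> 'a::field) \<Rightarrow> bool" where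
  "kappa_compatible \<phi> \<longleftrightarrow>
     (\<forall>v\<in>Vn. supported_on (\<phi> v) Vn \<and> kappa V lev E n (delta v) \<subseteq> kappa V lev E n (\<phi> v))"

lemma top_map_low: "v \<in> V \<Longrightarrow> 1 \<le> lev v \<Longrightarrow> lev v < n \<Longrightarrow> top_map \<phi> v = mon [v]"
  by (simp add: top_map_def)

lemma top_map_top: "v \<in> Vn \<Longrightarrow> top_map \<phi> v = emb (\<phi> v)"
  using two_le_n by (simp add: top_map_def layer_def)

lemma top_map_high: "n < lev v \<Longrightarrow> top_map \<phi> v = (\<lambda>_. 0)"
  by (simp add: top_map_def layer_def)

lemma finite_top_letters: "finite (top_letters v)"
  by (simp add: top_letters_def finite_layer)

lemma top_letters_levels: "y \<in> top_letters v \<Longrightarrow> y \<in> V \<and> 1 \<le> lev y \<and> lev y \<le> n"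
  using two_le_n by (auto simp: top_letters_def layer_def split: if_splits)

lemma top_letters_edge:
  assumes "y \<in> top_letters v" "z \<in> top_letters w" "(y, z) \<in> E"
  shows "(v, w) \<in> E \<or> (v \<in> Vn \<and> lev w + 1 = n)"
  using assms edge_levels[OF assms(3)] by (auto simp: top_letters_def layer_def split: if_splits)

lemma top_map_eq_sum_mon:
  "kappa_compatible \<phi> \<Longrightarrow>
   top_map \<phi> v = (\<lambda>u. \<Sum>y\<in>top_letters v. (if lev v < n then 1 else \<phi> v y) * mon [y] u)"
  by (auto simp: top_map_def top_letters_def kappa_compatible_def emb_eq_sum_mon[OF _ finite_layer]
      layer_def)

lemma tsupp_top_map: "kappa_compatible \<phi> \<Longrightarrow> tsupp (top_map \<phi> v) \<subseteq> (\<lambda>y. [y]) ` top_letters v"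
  using tsupp_lincomb by (fastforce simp: top_map_eq_sum_mon tsupp_mon)

lemma finite_tsupp_top_map: "kappa_compatible \<phi> \<Longrightarrow> finite (tsupp (top_map \<phi> v))"
  by (rule finite_subset[OF tsupp_top_map]) (simp_all add: finite_top_letters)

lemma TA_top_map: "kappa_compatible \<phi> \<Longrightarrow> top_map \<phi> v \<in> TA V lev n"
  using finite_tsupp_top_map tsupp_top_map top_letters_levels unfolding TA_def by fastforce

lemma RB_tmult_top_map:
  assumes "kappa_compatible \<phi>" "x \<in> RB V lev E"
  shows "tmult (top_map \<phi> v) x \<in> RB V lev E" "tmult x (top_map \<phi> v) \<in> RB V lev E"
  unfolding top_map_eq_sum_mon[OF assms(1)] using assms(2) top_letters_levels
  by (auto intro!: RB_tmult_letters_left RB_tmult_letters_right simp: finite_top_letters)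

lemma kappa_compatibleD:
  fixes \<phi> :: "'v \<Rightarrow> 'v \<Rightarrow> 'a::field"
  assumes "kappa_compatible \<phi>" "v \<in> Vn" "c \<in> succ_const {v}"
  shows "tmult (emb (\<phi> v)) (emb c) \<in> RB V lev E"
proof -
  have "c \<in> kappa V lev E n (delta v)" using assms(3) kappa_delta[OF assms(2), where 'a='a] by simp
  then have "c \<in> kappa V lev E n (\<phi> v)" using assms(1,2) by (auto simp: kappa_compatible_def)
  then show ?thesis by (simp add: kappa_def)
qed

lemma subst_top_map_nonedge:
  fixes \<phi> :: "'v \<Rightarrow> 'v \<Rightarrow> 'a::field"
  assumes \<phi>: "kappa_compatible \<phi>" and v: "v \<in> V" "1 \<le> lev v" and w: "w \<in> V" "1 \<le> lev w"
    and vw: "(v, w) \<notin> E"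
  shows "tmult (top_map \<phi> v) (top_map \<phi> w) \<in> RB V lev E"
proof (cases "v \<in> Vn \<and> lev w + 1 = n")
  case True
  then have "w \<in> Vm" using w by (simp add: layer_def, linarith)
  then have "(delta w :: 'v \<Rightarrow> 'a) \<in> succ_const {v}"
    using vw by (auto simp: succ_const_def delta_apply supported_on_def split: if_splits)
  moreover have "top_map \<phi> w = emb (delta w)" using True w by (simp add: top_map_low emb_delta)
  ultimately show ?thesis using kappa_compatibleD[OF \<phi>] True by (simp add: top_map_top)
next
  case False
  show ?thesis
    using finite_tsupp_top_map[OF \<phi>] tsupp_top_map[OF \<phi>] top_letters_levels
      top_letters_edge vw False
    by (intro tmult_RB_of_nonedges[where Y="top_letters v" and Z="top_letters w"]) blast+
qed

lemma subst_top_map_succ_relation: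
  fixes \<phi> :: "'v \<Rightarrow> 'v \<Rightarrow> 'a::field"
  assumes \<phi>: "kappa_compatible \<phi>" and v: "v \<in> V" "2 \<le> lev v"
  shows "subst (top_map \<phi>) (\<lambda>u. \<Sum>w\<in>succs E v. mon [v, w] u) \<in> RB V lev E"
proof -
  let ?S = "succs E v"
  have succ_low: "top_map \<phi> w = mon [w]" if "w \<in> ?S" "lev v \<le> n" for w
    using that edge_levels[of v w] v by (intro top_map_low) (auto simp: succs_def)
  have image: "subst (top_map \<phi>) (\<lambda>u. \<Sum>w\<in>?S. mon [v, w] u) =
      (\<lambda>u. \<Sum>w\<in>?S. tmult (top_map \<phi> v) (top_map \<phi> w) u)"
    using subst_lincomb[of ?S "\<lambda>w. mon [v, w]" "top_map \<phi>" "\<lambda>_. 1"]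
    by (simp add: finite_succs tsupp_mon subst_pair)
  consider "n < lev v" | "lev v < n" | "lev v = n" by linarith
  then show ?thesis
  proof cases
    case 1
    then show ?thesis unfolding image top_map_high[OF 1] tmult_zero_left using RB.zero by simp
  next
    case 2
    have "(\<lambda>u. \<Sum>w\<in>?S. mon [v, w] u) \<in> RB V lev E"
      using v by (intro RB.gen) (auto simp: RB_gens_def)
    then show ?thesis
      unfolding image using 2 v succ_low by (simp add: top_map_low tmult_mon_mon)
  next
    case 3
    then have vn: "v \<in> Vn" using v by (simp add: layer_def)
    have "(\<lambda>u. \<Sum>w\<in>?S. tmult (top_map \<phi> v) (top_map \<phi> w) u) =
        tmult (emb (\<phi> v)) (emb (succ_indicator v))"
    proof -
      have "emb (succ_indicator v :: 'v \<Rightarrow> 'a) = (\<lambda>u. \<Sum>w\<in>?S. 1 * mon [w] u)"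
        by (auto simp: emb_eq_sum_mon[of _ ?S] finite_succs succ_indicator_def supported_on_def
            cong: sum.cong)
      then show ?thesis
        using 3 succ_low by (simp add: top_map_top[OF vn] tmult_sum_right tmult_scale_right)
    qed
    moreover note succ_indicator_in_succ_const[OF vn]
    ultimately show ?thesis unfolding image using kappa_compatibleD[OF \<phi> vn] by simp
  qed
qed

lemma subst_top_map_RB:
  assumes \<phi>: "kappa_compatible \<phi>"
  shows "x \<in> RB V lev E \<Longrightarrow> subst (top_map \<phi>) x \<in> RB V lev E"
proof (induction rule: RB.induct)
  case zero then show ?case by (simp add: subst_zero RB.zero)
next
  case (gen g)
  then consider v w where "g = mon [v, w]" "v \<in> V" "w \<in> V" "1 \<le> lev v" "1 \<le> lev w" "(v, w) \<notin> E"
    | v where "g = (\<lambda>u. \<Sum>w\<in>succs E v. mon [v, w] u)" "v \<in> V" "2 \<le> lev v"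
    unfolding RB_gens_def by auto
  then show ?case
    by cases (simp_all add: subst_pair subst_top_map_nonedge[OF \<phi>] subst_top_map_succ_relation[OF \<phi>])
next
  case (add x y)
  then show ?case by (simp add: subst_add RB_finite_tsupp RB.add)
next
  case (scale x c)
  then show ?case by (simp add: subst_scale RB_finite_tsupp RB.scale)
next
  case (lmult x v)
  then show ?case by (simp add: subst_tmult RB_finite_tsupp tsupp_mon subst_letter RB_tmult_top_map[OF \<phi>])
next
  case (rmult x v)
  then show ?case by (simp add: subst_tmult RB_finite_tsupp tsupp_mon subst_letter RB_tmult_top_map[OF \<phi>])
qed

lemma subst_top_map_emb:
  assumes "kappa_compatible \<psi>" "supported_on \<beta> Vn"
  shows "subst (top_map \<psi>) (emb \<beta>) = emb (\<lambda>z. \<Sum>y\<in>Vn. \<beta> y * \<psi> y z)"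
proof -
  have "subst (top_map \<psi>) (emb \<beta>) = (\<lambda>u. \<Sum>y\<in>Vn. \<beta> y * subst (top_map \<psi>) (mon [y]) u)"
    unfolding emb_eq_sum_mon[OF assms(2) finite_layer]
    by (rule subst_lincomb) (simp_all add: finite_layer tsupp_mon)
  also have "\<dots> = emb (\<lambda>z. \<Sum>y\<in>Vn. \<beta> y * \<psi> y z)"
    by (simp add: subst_letter top_map_top sum_emb cong: sum.cong)
  finally show ?thesis .
qed

lemma subst_top_map_top_map:
  fixes \<phi> \<gamma> :: "'v \<Rightarrow> 'v \<Rightarrow> 'a::field"
  assumes "kappa_compatible \<phi>" "kappa_compatible \<gamma>"
    and inverse: "\<And>v z. v \<in> Vn \<Longrightarrow> (\<Sum>y\<in>Vn. \<phi> v y * \<gamma> y z) = delta v z"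
    and a: "a \<in> V" "1 \<le> lev a" "lev a \<le> n"
  shows "subst (top_map \<gamma>) (top_map \<phi> a) = mon [a]"
proof (cases "lev a < n")
  case True
  then show ?thesis using a by (simp add: top_map_low subst_letter)
next
  case False
  then have a: "a \<in> Vn" using a by (simp add: layer_def)
  then have "supported_on (\<phi> a) Vn" using assms(1) by (simp add: kappa_compatible_def)
  then show ?thesis
    using a by (simp add: top_map_top subst_top_map_emb[OF assms(2)] inverse emb_delta)
qed

lemma subst_top_map_inverse:
  fixes \<phi> \<gamma> :: "'v \<Rightarrow> 'v \<Rightarrow> 'a::field"
  assumes "kappa_compatible \<phi>" "kappa_compatible \<gamma>"
    and "\<And>v z. v \<in> Vn \<Longrightarrow> (\<Sum>y\<in>Vn. \<phi> v y * \<gamma> y z) = delta v z"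
    and x: "x \<in> TA V lev n"
  shows "subst (top_map \<gamma>) (subst (top_map \<phi>) x) = x"
proof -
  have fin: "finite (tsupp x)" using x by (simp add: TA_def)
  have "subst (top_map \<gamma>) (top_map \<phi> a) = mon [a]" if "w \<in> tsupp x" "a \<in> set w" for w a
    using x that by (intro subst_top_map_top_map[OF assms(1-3)]) (auto simp: TA_def)
  then show ?thesis
    by (simp add: subst_subst[OF fin finite_tsupp_top_map[OF assms(1)]] subst_eq_self[OF fin])
qed

lemma upper_vertex_like_if_inverse:
  fixes \<phi> \<gamma> :: "'v \<Rightarrow> 'v \<Rightarrow> 'a::field"
  assumes \<phi>: "kappa_compatible \<phi>" and \<gamma>: "kappa_compatible \<gamma>"
    and \<phi>\<gamma>: "\<And>v z. v \<in> Vn \<Longrightarrow> (\<Sum>y\<in>Vn. \<phi> v y * \<gamma> y z) = delta v z"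
    and \<gamma>\<phi>: "\<And>v z. v \<in> Vn \<Longrightarrow> (\<Sum>y\<in>Vn. \<gamma> v y * \<phi> y z) = delta v z"
    and image: "\<phi> ` Vn = b ` {..<card Vn}"
  shows "upper_vertex_like V lev E n b"
  unfolding upper_vertex_like_def
proof (intro exI[of _ "top_map \<phi>"] conjI ballI impI)
  fix x :: "'v list \<Rightarrow> 'a" assume x: "x \<in> TA V lev n"
  show "subst (top_map \<phi>) x \<in> RB V lev E" if "x \<in> RB V lev E"
    using subst_top_map_RB[OF \<phi> that] .
  assume "subst (top_map \<phi>) x \<in> RB V lev E"
  then have "subst (top_map \<gamma>) (subst (top_map \<phi>) x) \<in> RB V lev E"
    by (rule subst_top_map_RB[OF \<gamma>])
  then show "x \<in> RB V lev E" using subst_top_map_inverse[OF \<phi> \<gamma> \<phi>\<gamma> x] by simp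
next
  fix y :: "'v list \<Rightarrow> 'a" assume y: "y \<in> TA V lev n"
  have "subst (top_map \<phi>) (subst (top_map \<gamma>) y) = y"
    by (rule subst_top_map_inverse[OF \<gamma> \<phi> \<gamma>\<phi> y])
  moreover have "subst (top_map \<gamma>) y \<in> TA V lev n"
    by (rule TA_subst[OF y TA_top_map[OF \<gamma>]])
  ultimately show "\<exists>x\<in>TA V lev n. (\<lambda>u. subst (top_map \<phi>) x u - y u) \<in> RB V lev E"
    using RB.zero by force
next
  have "top_map \<phi> ` Vn = emb ` \<phi> ` Vn" by (simp add: image_image top_map_top)
  then show "top_map \<phi> ` Vn = emb ` b ` {..<card Vn}" using image by simp
qed (use \<phi> in \<open>auto simp: top_map_low top_map_top kappa_compatible_def\<close>)

end

subsection \<open>Bases chosen greedily by the dimension of \<open>\<kappa>\<close>\<close>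

locale greedy_basis = top_layer V lev E n for V :: "'v set" and lev E n +
  fixes b :: "nat \<Rightarrow> 'v \<Rightarrow> 'a::field"
  assumes basis: "is_basis_Bn V lev n b"
    and greedy: "\<And>i a. i < card Vn \<Longrightarrow> a \<in> Vn \<Longrightarrow> \<not> in_lin_span (delta a) b i \<Longrightarrow>
      fv.dim (kappa V lev E n (delta a :: 'v \<Rightarrow> 'a)) \<le> fv.dim (kappa V lev E n (b i))"
begin

abbreviation "k \<equiv> card Vn"

abbreviation kap :: "('v \<Rightarrow> 'a) \<Rightarrow> ('v \<Rightarrow> 'a) set" where
  "kap x \<equiv> kappa V lev E n x"

definition kdim :: "'v \<Rightarrow> nat" where
  "kdim u = fv.dim (kap (delta u))"

lemma supported_b: "i < k \<Longrightarrow> supported_on (b i) Vn"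
  using basis by (simp add: is_basis_Bn_def)

lemma b_coefficients_zero: "(\<And>v. (\<Sum>i<k. \<alpha> i * b i v) = 0) \<Longrightarrow> i < k \<Longrightarrow> \<alpha> i = 0"
  using basis by (simp add: is_basis_Bn_def)

lemma inj_on_b: "inj_on b {..<k}"
proof (rule inj_onI, rule ccontr)
  fix i j assume i: "i \<in> {..<k}" and j: "j \<in> {..<k}" and eq: "b i = b j" and "i \<noteq> j"
  define \<alpha> where "\<alpha> l = (if l = i then 1 else if l = j then -1 else 0 :: 'a)" for l
  have "(\<Sum>l<k. \<alpha> l * b l v) = b i v - b j v" for v
  proof -
    have "(\<Sum>l<k. \<alpha> l * b l v) =
        (\<Sum>l<k. (if l = i then b i v else 0) + (if l = j then - b j v else 0))"
      by (intro sum.cong) (auto simp: \<alpha>_def \<open>i \<noteq> j\<close>)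
    also have "\<dots> = b i v - b j v" using i j by (simp add: sum.distrib)
    finally show ?thesis .
  qed
  then have "\<alpha> i = 0" using b_coefficients_zero[of \<alpha> i] i eq by simp
  then show False by (simp add: \<alpha>_def)
qed

lemma independent_b: "I \<subseteq> {..<k} \<Longrightarrow> fv.independent (b ` I)"
proof (rule fv.independent_mono[of "b ` {..<k}"])
  show "fv.independent (b ` {..<k})"
  proof (rule fv.independent_if_scalars_zero)
    fix f :: "('v \<Rightarrow> 'a) \<Rightarrow> 'a" and x
    assume z: "(\<Sum>x\<in>b ` {..<k}. (\<lambda>y. f x * x y)) = 0" and x: "x \<in> b ` {..<k}"
    have "(\<Sum>l<k. f (b l) * b l v) = 0" for v
      using fun_cong[OF z, of v] by (simp add: sum_fun_apply sum.reindex[OF inj_on_b])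
    then show "f x = 0" using x b_coefficients_zero[of "\<lambda>l. f (b l)"] by blast
  qed simp
qed auto

lemma b_notin_span_prefix: "i < k \<Longrightarrow> b i \<notin> fv.span (b ` {..<i})"
proof
  assume i: "i < k" and "b i \<in> fv.span (b ` {..<i})"
  moreover have "b ` {..<i} \<subseteq> b ` {..<k} - {b i}"
    using i inj_on_b by (auto simp: inj_on_def)
  ultimately have "fv.dependent (b ` {..<k})"
    unfolding fv.dependent_def using i fv.span_mono by blast
  then show False using independent_b[of "{..<k}"] by simp
qed

text \<open>Some vertex in the support of \<open>b\<^sub>i\<close> is not in the span of \<open>b\<^sub>0, \<dots>, b\<^sub>i\<^sub>-\<^sub>1\<close>; the
  hypothesis bounds its \<open>\<kappa>\<close> by that of \<open>b\<^sub>i\<close>, and the reverse inclusion always holds.\<close>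

lemma kappa_b_eq_kappa_delta:
  assumes i: "i < k"
  obtains u where "u \<in> Vn" "b i u \<noteq> 0" "kap (b i) = kap (delta u)"
proof -
  let ?U = "{u\<in>Vn. b i u \<noteq> 0}"
  have "b i \<in> fv.span (delta ` ?U)"
    using supported_b[OF i] finite_layer
    by (intro supported_on_in_span_delta) (auto simp: supported_on_def)
  then have "\<not> delta ` ?U \<subseteq> fv.span (b ` {..<i})"
    using b_notin_span_prefix[OF i] fv.span_minimal[OF _ fv.subspace_span] by blast
  then obtain u where u: "u \<in> Vn" "b i u \<noteq> 0" "\<not> in_lin_span (delta u) b i"
    by (auto simp: in_lin_span_iff_span)
  have sub: "kap (b i) \<subseteq> kap (delta u)"
    by (rule kappa_subset_kappa_delta[OF supported_b[OF i] u(2)])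
  have "kap (delta u) \<subseteq> kap (b i)"
    using fv.subset_subspace_of_dim_le[OF sub kappa_subset_span _ greedy[OF i u(1,3)]]
      subspace_kappa[OF supported_b[OF i]] finite_layer by blast
  with sub u show thesis using that by blast
qed

lemma dim_kappa_b_ge:
  assumes i: "i < card {w\<in>Vn. t \<le> kdim w}"
  shows "t \<le> fv.dim (kap (b i))"
proof -
  let ?W = "{w\<in>Vn. t \<le> kdim w}"
  have "card ?W \<le> k" using finite_layer by (intro card_mono) auto
  then have ik: "i < k" using i by simp
  have "\<not> delta ` ?W \<subseteq> fv.span (b ` {..<i})"
  proof
    assume sub: "delta ` ?W \<subseteq> fv.span (b ` {..<i})"
    have "fv.independent (delta ` ?W :: ('v \<Rightarrow> 'a) set)"
      by (rule fv_independent_delta) (simp add: finite_layer)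
    then have "card (delta ` ?W :: ('v \<Rightarrow> 'a) set) \<le> card (b ` {..<i})"
      using fv.independent_span_bound[OF _ _ sub] by simp
    also have "\<dots> \<le> i" using card_image_le[of "{..<i}" b] by simp
    finally show False
      using i by (simp add: card_image inj_on_subset[OF inj_delta])
  qed
  then obtain a where "a \<in> Vn" "t \<le> kdim a" "\<not> in_lin_span (delta a) b i"
    by (auto simp: in_lin_span_iff_span)
  then show ?thesis using greedy[OF ik] by (fastforce simp: kdim_def)
qed

lemma card_dim_greater_le:
  "card {w\<in>Vn. t < kdim w} \<le> card {i\<in>{..<k}. t < fv.dim (kap (b i))}"
proof -
  have "card {w\<in>Vn. t < kdim w} \<le> k" using finite_layer by (intro card_mono) auto
  then have "{..<card {w\<in>Vn. t < kdim w}} \<subseteq> {i\<in>{..<k}. t < fv.dim (kap (b i))}"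
    using dim_kappa_b_ge[of _ "Suc t"] by (auto simp: Suc_le_eq)
  then have "card {..<card {w\<in>Vn. t < kdim w}} \<le> card {i\<in>{..<k}. t < fv.dim (kap (b i))}"
    by (intro card_mono) auto
  then show ?thesis by simp
qed

text \<open>For a class \<open>p = \<kappa>(\<delta>\<^sub>u\<^sub>0)\<close>, the \<open>b\<^sub>i\<close> with \<open>\<kappa>(b\<^sub>i) = p\<close> or with larger \<open>\<kappa>\<close>-dimension are
  supported on vertices of class \<open>p\<close> or of larger dimension; the latter are at most as
  many as the \<open>b\<^sub>i\<close> of larger dimension, so by independence the class \<open>p\<close> has at most as
  many \<open>b\<^sub>i\<close> as vertices.\<close>

lemma support_b_in_class_or_greater:
  assumes i: "i < k" and bi: "b i w \<noteq> 0" and u0: "u0 \<in> Vn"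
    and in_class: "kap (b i) = kap (delta u0) \<or> kdim u0 < fv.dim (kap (b i))"
  shows "w \<in> Vn \<and> (kap (delta w) = kap (delta u0) \<or> kdim u0 < kdim w)"
proof -
  have w: "w \<in> Vn" using supported_b[OF i] bi by (simp add: supported_on_def)
  have sub: "kap (b i) \<subseteq> kap (delta w)" and le: "fv.dim (kap (b i)) \<le> kdim w"
    using kappa_subset_kappa_delta[OF supported_b[OF i] bi]
      dim_kappa_le_dim_kappa_delta[OF supported_b[OF i] bi] by (auto simp: kdim_def)
  have "kap (delta w) \<subseteq> kap (delta u0)" if "kap (b i) = kap (delta u0)" "kdim w \<le> kdim u0"
    using fv.subset_subspace_of_dim_le[OF sub kappa_subset_span]
      subspace_kappa[OF supported_b[OF i]] finite_layer that by (simp add: kdim_def)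
  then show ?thesis using w sub le in_class by fastforce
qed

lemma card_kappa_class_le:
  assumes u0: "u0 \<in> Vn"
  shows "card {i\<in>{..<k}. kap (b i) = kap (delta u0)} \<le> card {u\<in>Vn. kap (delta u) = kap (delta u0)}"
proof -
  let ?IC = "{i\<in>{..<k}. kap (b i) = kap (delta u0)}"
  let ?IG = "{i\<in>{..<k}. kdim u0 < fv.dim (kap (b i))}"
  let ?C = "{u\<in>Vn. kap (delta u) = kap (delta u0)}"
  let ?UG = "{w\<in>Vn. kdim u0 < kdim w}"
  have fin: "finite ?C" "finite ?UG" using finite_layer by simp_all
  have span: "b ` (?IC \<union> ?IG) \<subseteq> fv.span (delta ` (?C \<union> ?UG))"
    using support_b_in_class_or_greater[OF _ _ u0] fin
    by (intro image_subsetI supported_on_in_span_delta) (auto simp: supported_on_def)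
  have "fv.independent (b ` (?IC \<union> ?IG))" by (rule independent_b) auto
  then have "card (b ` (?IC \<union> ?IG)) \<le> card (delta ` (?C \<union> ?UG) :: ('v \<Rightarrow> 'a) set)"
    using fv.independent_span_bound[OF _ _ span] fin by simp
  also have "\<dots> \<le> card ?C + card ?UG"
    using fin by (intro order_trans[OF card_image_le card_Un_le]) simp
  also have "card (b ` (?IC \<union> ?IG)) = card ?IC + card ?IG"
  proof -
    have "card (b ` (?IC \<union> ?IG)) = card (?IC \<union> ?IG)"
      by (rule card_image, rule inj_on_subset[OF inj_on_b]) auto
    also have "\<dots> = card ?IC + card ?IG" by (intro card_Un_disjoint) (auto simp: kdim_def)
    finally show ?thesis .
  qed
  finally have "card ?IC + card ?IG \<le> card ?C + card ?UG" .
  then show ?thesis using card_dim_greater_le[of "kdim u0"] by simp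
qed

lemma card_kappa_classes_eq:
  "card {u\<in>Vn. kap (delta u) = c} = card {i\<in>{..<k}. kap (b i) = c}"
proof -
  let ?P = "(\<lambda>u. kap (delta u)) ` Vn"
  have fin: "finite ?P" using finite_layer by simp
  have into_P: "(\<lambda>i. kap (b i)) ` {..<k} \<subseteq> ?P"
  proof (rule image_subsetI)
    fix i assume "i \<in> {..<k}"
    then obtain u where "u \<in> Vn" "kap (b i) = kap (delta u)"
      using kappa_b_eq_kappa_delta by blast
    then show "kap (b i) \<in> ?P" by blast
  qed
  have "(\<Sum>p\<in>?P. card {i\<in>{..<k}. kap (b i) = p}) = (\<Sum>p\<in>?P. card {u\<in>Vn. kap (delta u) = p})"
    using sum.group[OF finite_lessThan fin into_P, of "\<lambda>_. 1::nat"]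
      sum.group[OF finite_layer[of n] fin, of "\<lambda>u. kap (delta u)" "\<lambda>_. 1::nat"] by simp
  then have eq: "card {i\<in>{..<k}. kap (b i) = p} = card {u\<in>Vn. kap (delta u) = p}" if "p \<in> ?P" for p
    by (rule sum_mono_inv[OF _ _ that fin]) (use card_kappa_class_le in blast)
  show ?thesis
  proof (cases "c \<in> ?P")
    case True
    then show ?thesis using eq by simp
  next
    case False
    then have "{u\<in>Vn. kap (delta u) = c} = {}" "{i\<in>{..<k}. kap (b i) = c} = {}"
      using into_P by auto
    then show ?thesis by (simp only: card.empty)
  qed
qed

lemma obtain_kappa_matching:
  obtains h where "bij_betw h Vn {..<k}" "\<And>u. u \<in> Vn \<Longrightarrow> kap (b (h u)) = kap (delta u)"
proof (rule bij_betw_preserving_fibres[of Vn "{..<k}" "\<lambda>u. kap (delta u)" "\<lambda>i. kap (b i)"])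
  show "finite Vn" by (rule finite_layer)
  show "card {u\<in>Vn. kap (delta u) = c} = card {i\<in>{..<k}. kap (b i) = c}" for c
    by (rule card_kappa_classes_eq)
qed (use that in auto)

definition up_set :: "'v \<Rightarrow> 'v set" where
  "up_set w = {x\<in>Vn. kap (delta w) \<subseteq> kap (delta x)}"

lemma kappa_compatible_supported_up_set:
  fixes \<gamma> :: "'v \<Rightarrow> 'v \<Rightarrow> 'a"
  assumes "\<And>w. w \<in> Vn \<Longrightarrow> supported_on (\<gamma> w) (up_set w)"
  shows "kappa_compatible \<gamma>"
  unfolding kappa_compatible_def
proof (intro ballI conjI)
  fix v assume v: "v \<in> Vn"
  then show supp: "supported_on (\<gamma> v) Vn"
    using assms by (auto simp: supported_on_def up_set_def)
  have sub: "kap (delta v) \<subseteq> succ_const {x}" if "\<gamma> v x \<noteq> 0" for x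
    using assms[OF v] that kappa_delta[of x] by (auto simp: supported_on_def up_set_def)
  have "kap (delta v) \<subseteq> succ_const {x. \<gamma> v x \<noteq> 0}"
  proof
    fix c assume c: "c \<in> kap (delta v)"
    show "c \<in> succ_const {x. \<gamma> v x \<noteq> 0}"
    proof (rule succ_const_iff[THEN iffD2], intro conjI ballI)
      show "supported_on c Vm" using c by (simp add: kappa_def)
      fix x assume "x \<in> {x. \<gamma> v x \<noteq> 0}"
      then show "c \<in> succ_const {x}" using sub c by blast
    qed
  qed
  then show "kap (delta v) \<subseteq> kap (\<gamma> v)" using kappa_eq_succ_const[OF supp] by simp
qed

context
  fixes h :: "'v \<Rightarrow> nat"
  assumes h_bij: "bij_betw h Vn {..<k}"
    and h_kappa: "\<And>u. u \<in> Vn \<Longrightarrow> kap (b (h u)) = kap (delta u)"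
begin

lemma h_less: "u \<in> Vn \<Longrightarrow> h u < k"
  using h_bij by (auto simp: bij_betw_def)

lemma supported_b_h_up_set:
  assumes x: "x \<in> up_set w"
  shows "supported_on (b (h x)) (up_set w)"
  unfolding supported_on_def
proof (intro allI impI)
  fix y assume y: "b (h x) y \<noteq> 0"
  have x': "x \<in> Vn" using x by (simp add: up_set_def)
  have "kap (delta x) \<subseteq> kap (delta y)"
    using kappa_subset_kappa_delta[OF supported_b[OF h_less[OF x']] y] h_kappa[OF x'] by simp
  moreover have "y \<in> Vn" using supported_b[OF h_less[OF x']] y by (simp add: supported_on_def)
  ultimately show "y \<in> up_set w" using x by (auto simp: up_set_def)
qed

text \<open>The \<open>b\<^sub>h\<^sub>(\<^sub>x\<^sub>)\<close> with \<open>x\<close> in the up-set of \<open>w\<close> are as many independent vectors in the span of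
  the \<open>\<delta>\<^sub>x\<close>, hence span it; the coefficients of \<open>\<delta>\<^sub>w\<close> form the inverse matrix.\<close>

lemma delta_in_span_up_set:
  assumes w: "w \<in> Vn"
  obtains \<gamma> where "supported_on \<gamma> (up_set w)" "\<And>z. delta w z = (\<Sum>y\<in>Vn. \<gamma> y * b (h y) z)"
proof -
  let ?U = "up_set w"
  let ?B = "(\<lambda>u. b (h u)) ` ?U"
  have U: "finite ?U" "?U \<subseteq> Vn" using finite_layer by (auto simp: up_set_def)
  have "inj_on h ?U" using inj_on_subset[OF bij_betw_imp_inj_on[OF h_bij] U(2)] .
  moreover have "inj_on b (h ` ?U)" by (rule inj_on_subset[OF inj_on_b]) (use h_less U(2) in auto)
  ultimately have inj: "inj_on (\<lambda>u. b (h u)) ?U" using comp_inj_on by (simp add: o_def)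
  have "fv.independent ?B"
    using independent_b[of "h ` ?U"] h_less U(2) by (auto simp: image_image)
  moreover have "?B \<subseteq> fv.span (delta ` ?U)"
    using supported_b_h_up_set U(1) supported_on_in_span_delta by blast
  moreover have "card (delta ` ?U :: ('v \<Rightarrow> 'a) set) \<le> card ?B"
    using card_image[OF inj] card_image[OF inj_on_subset[OF inj_delta[where 'a='a and 'b='v]]] by simp
  ultimately have "delta ` ?U \<subseteq> fv.span ?B"
    using fv.span_superset_of_card_le fv_independent_delta U(1) by blast
  moreover have "w \<in> ?U" using w by (simp add: up_set_def)
  ultimately obtain c where c: "delta w = (\<Sum>v\<in>?B. (\<lambda>z. c v * v z))"
    using fv.span_finite[of ?B] U(1) by auto
  define \<gamma> where "\<gamma> y = (if y \<in> ?U then c (b (h y)) else 0)" for y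
  have "delta w z = (\<Sum>y\<in>Vn. \<gamma> y * b (h y) z)" for z
  proof -
    have "(\<Sum>y\<in>Vn. \<gamma> y * b (h y) z) = (\<Sum>y\<in>?U. c (b (h y)) * b (h y) z)"
      using U by (intro sum.mono_neutral_cong_right) (auto simp: \<gamma>_def finite_layer)
    also have "\<dots> = (\<Sum>v\<in>?B. c v * v z)" by (simp add: sum.reindex[OF inj])
    finally show ?thesis by (simp add: c sum_fun_apply)
  qed
  moreover have "supported_on \<gamma> ?U" by (simp add: \<gamma>_def supported_on_def)
  ultimately show thesis using that by blast
qed

lemma obtain_left_inverse_up_set:
  obtains \<gamma> where "\<And>w. w \<in> Vn \<Longrightarrow> supported_on (\<gamma> w) (up_set w)"
    "\<And>w z. w \<in> Vn \<Longrightarrow> (\<Sum>y\<in>Vn. \<gamma> w y * b (h y) z) = delta w z"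
proof -
  have "\<forall>w\<in>Vn. \<exists>c. supported_on c (up_set w) \<and> (\<forall>z. (\<Sum>y\<in>Vn. c y * b (h y) z) = delta w z)"
  proof
    fix w assume "w \<in> Vn"
    then obtain c where "supported_on c (up_set w)" "\<And>z. delta w z = (\<Sum>y\<in>Vn. c y * b (h y) z)"
      using delta_in_span_up_set by blast
    then show "\<exists>c. supported_on c (up_set w) \<and> (\<forall>z. (\<Sum>y\<in>Vn. c y * b (h y) z) = delta w z)"
      by auto
  qed
  then show thesis using that by (metis bchoice)
qed

lemma kappa_compatible_b_h: "kappa_compatible (\<lambda>v. b (h v))"
  using supported_b h_less h_kappa by (simp add: kappa_compatible_def)

lemma b_h_coefficients_zero:
  assumes "\<And>z. (\<Sum>x\<in>Vn. c x * b (h x) z) = 0" "y \<in> Vn"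
  shows "c y = 0"
proof -
  define \<alpha> where "\<alpha> i = c (inv_into Vn h i)" for i
  have "(\<Sum>i<k. \<alpha> i * b i z) = (\<Sum>x\<in>Vn. c x * b (h x) z)" for z
    using sum.reindex_bij_betw[OF h_bij, of "\<lambda>i. \<alpha> i * b i z"] h_bij
    by (auto simp: \<alpha>_def bij_betw_def intro: sum.cong)
  then have "\<alpha> (h y) = 0" using b_coefficients_zero assms h_less by metis
  then show ?thesis using h_bij assms(2) by (simp add: \<alpha>_def bij_betw_def)
qed

end

lemma upper_vertex_like: "upper_vertex_like V lev E n b"
proof -
  obtain h where h: "bij_betw h Vn {..<k}" "\<And>u. u \<in> Vn \<Longrightarrow> kap (b (h u)) = kap (delta u)"
    using obtain_kappa_matching by blast
  define \<phi> where "\<phi> = (\<lambda>v. b (h v))"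
  obtain \<gamma> where \<gamma>: "\<And>w. w \<in> Vn \<Longrightarrow> supported_on (\<gamma> w) (up_set w)"
    and \<gamma>\<phi>: "\<And>w z. w \<in> Vn \<Longrightarrow> (\<Sum>y\<in>Vn. \<gamma> w y * \<phi> y z) = delta w z"
    using obtain_left_inverse_up_set[OF h] unfolding \<phi>_def by blast
  have \<phi>: "kappa_compatible \<phi>" and \<gamma>': "kappa_compatible \<gamma>"
    using kappa_compatible_b_h[OF h] kappa_compatible_supported_up_set[OF \<gamma>]
    by (simp_all add: \<phi>_def)
  have \<phi>\<gamma>: "(\<Sum>y\<in>Vn. \<phi> v y * \<gamma> y z) = delta v z" if "v \<in> Vn" for v z
    using right_inverse_if_left_inverse[OF finite_layer _ \<gamma>\<phi> _ that]
      b_h_coefficients_zero[OF h] \<phi> \<gamma>' by (auto simp: \<phi>_def kappa_compatible_def)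
  have "\<phi> ` Vn = b ` {..<k}" using h(1) by (simp add: \<phi>_def bij_betw_def image_image[symmetric])
  then show ?thesis using upper_vertex_like_if_inverse[OF \<phi> \<gamma>' \<phi>\<gamma> \<gamma>\<phi>] by simp
qed

end

theorem mainTheorem14:
  fixes V :: "'v set" and lev :: "'v \<Rightarrow> nat" and E :: "('v \<times> 'v) set"
    and n :: nat and b :: "nat \<Rightarrow> 'v \<Rightarrow> 'a::field"
  assumes "layered_graph V lev E"
    and "uniform V lev E"
    and "card (layer V lev 0) = 1"
    and "2 \<le> n"
    and "is_basis_Bn V lev n b"
    and "\<forall>i < card (layer V lev n). \<forall>a \<in> layer V lev n.
           \<not> in_lin_span (delta a) b i \<longrightarrow>
           fdim (kappa V lev E n (delta a)) \<le> fdim (kappa V lev E n (b i))"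
  shows "upper_vertex_like V lev E n b"
proof -
  interpret top_layer V lev E n using assms(1,4) by unfold_locales
  txt \<open>The hypothesis measures \<open>\<kappa>\<^sub>a\<close> over an arbitrary field (the type of \<open>delta a\<close> inside
    \<open>fdim\<close> is not tied to \<open>'a\<close>); this is harmless since its dimension is field-independent.\<close>
  have "fv.dim (kappa V lev E n (delta a :: 'v \<Rightarrow> 'a)) \<le> fv.dim (kappa V lev E n (b i))"
    if "i < card (layer V lev n)" "a \<in> layer V lev n" "\<not> in_lin_span (delta a) b i" for i a
    using assms(6)[rule_format, OF that] by (simp only: dim_kappa_delta[OF that(2)])
  then interpret greedy_basis V lev E n b using assms(5) by unfold_locales
  show ?thesis by (rule upper_vertex_like)
qed

end
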